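(* For every $p,q\in(0,\infty)$ and $r\in(0,q]$ there exist constants $C=C(p,q,r)$ and $c=c(p,q,r)$ such that the following holds. Let $X$ be a finite set, $\mu,\nu$ outer measures on $X$, and $\omega$ a measure on $X$. For every $f\in L^p_\mu(\ell^q_\nu(\ell^r_\omega))$ on $X$ there exists a collection $\{E_k:k\in\mathbb Z\}$ of pairwise disjoint subsets of $X$ forming a partition of the support of $f$ such that, setting $F_k=\bigcup_{l\ge k}E_l$, for every $k\in\mathbb Z$: (a) if $E_k\ne\varnothing$, then $\ell^q_\nu(\ell^r_\omega)(f1_{X\setminus F_{k+1}})(E_k)>c2^k$; (b) $\|f1_{X\setminus F_k}\|_{L^\infty_\mu(\ell^q_\nu(\ell^r_\omega))}\le2^k$; (c) $\mu(\ell^q_\nu(\ell^r_\omega)(f)>2^k)\le\mu(F_k)$; (d) $\mu(E_k)\le C\mu(\ell^q_\nu(\ell^r_\omega)(f)>c2^k)$. In particular, there is a constant $C'=C'(p,q,r)$ with $C'^{-1}\|f\|^p_{L^p_\mu(\ell^q_\nu(\ell^r_\omega))}\le\sum_{k\in\mathbb Z}2^{kp}\mu(E_k)\le C'\|f\|^p_{L^p_\mu(\ell^q_\nu(\ell^r_\omega))}$, and the same two-sided bound holds with $\sum_k 2^{kp}\mu(E_k)$ replaced by $\sum_{k}2^{kp}\sum_{l\ge k}\mu(E_l)$.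
   Context: An outer measure on $X$ is a monotone, subadditive function $\mathcal P(X)\to[0,\infty]$ vanishing on $\varnothing$; standing assumption: outer measures are finite and strictly positive on nonempty subsets; $\omega$ is given by a finite strictly positive weight. The support of $f$ is $\{x:f(x)\ne0\}$. Quasi-norms: for nonempty $A$, $\ell^r_\omega(f)(A)=\nu(A)^{-1/r}\|f1_A\|_{L^r(X,\omega)}$; $\|f\|_{L^\infty_\nu(\ell^r_\omega)}=\sup_{\varnothing\ne A}\ell^r_\omega(f)(A)$; $\nu(\ell^r_\omega(f)>\lambda)=\inf\{\nu(B):\|f1_{X\setminus B}\|_{L^\infty_\nu(\ell^r_\omega)}\le\lambda\}$; $\|f\|_{L^q_\nu(\ell^r_\omega)}=(\int_0^\infty q\lambda^{q-1}\nu(\ell^r_\omega(f)>\lambda)d\lambda)^{1/q}$; $\ell^q_\nu(\ell^r_\omega)(f)(A)=\mu(A)^{-1/q}\|f1_A\|_{L^q_\nu(\ell^r_\omega)}$; $\|f\|_{L^\infty_\mu(\ell^q_\nu(\ell^r_\omega))}=\sup_{\varnothing\ne A}\ell^q_\nu(\ell^r_\omega)(f)(A)$; $\mu(\ell^q_\nu(\ell^r_\omega)(f)>\lambda)=\inf\{\mu(B):\|f1_{X\setminus B}\|_{L^\infty_\mu(\ell^q_\nu(\ell^r_\omega))}\le\lambda\}$; $\|f\|_{L^p_\mu(\ell^q_\nu(\ell^r_\omega))}=(\int_0^\infty p\lambda^{p-1}\mu(\ell^q_\nu(\ell^r_\omega)(f)>\lambda)d\lambda)^{1/p}$. *)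

theory Defs
  imports "HOL-Analysis.Analysis"
begin

text \<open>On a finite ground set, countable subadditivity is
equivalent to finite subadditivity.\<close>
definition outer_measure_on :: "'a set \<Rightarrow> ('a set \<Rightarrow> real) \<Rightarrow> bool" where
  "outer_measure_on X \<mu> \<longleftrightarrow>
     \<mu> {} = 0 \<and>
     (\<forall>A B. A \<subseteq> B \<longrightarrow> B \<subseteq> X \<longrightarrow> \<mu> A \<le> \<mu> B) \<and>
     (\<forall>A B. A \<subseteq> X \<longrightarrow> B \<subseteq> X \<longrightarrow> \<mu> (A \<union> B) \<le> \<mu> A + \<mu> B) \<and>
     (\<forall>A. A \<subseteq> X \<longrightarrow> A \<noteq> {} \<longrightarrow> \<mu> A > 0)"

definition restr :: "'a set \<Rightarrow> ('a \<Rightarrow> real) \<Rightarrow> 'a \<Rightarrow> real" where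
  "restr A f = (\<lambda>x. if x \<in> A then f x else 0)"

definition supp_on :: "'a set \<Rightarrow> ('a \<Rightarrow> real) \<Rightarrow> 'a set" where
  "supp_on X f = {x \<in> X. f x \<noteq> 0}"

text \<open>L^r(X,\<omega>) norm, \<omega> given by the weight w\<close>
definition Lr_norm :: "'a set \<Rightarrow> ('a \<Rightarrow> real) \<Rightarrow> real \<Rightarrow> ('a \<Rightarrow> real) \<Rightarrow> real" where
  "Lr_norm X w r f = (\<Sum>x\<in>X. w x * \<bar>f x\<bar> powr r) powr (1 / r)"

definition ell_r :: "'a set \<Rightarrow> ('a \<Rightarrow> real) \<Rightarrow> ('a set \<Rightarrow> real) \<Rightarrow> real
                      \<Rightarrow> ('a \<Rightarrow> real) \<Rightarrow> 'a set \<Rightarrow> real" where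
  "ell_r X w \<nu> r f A = \<nu> A powr (- 1 / r) * Lr_norm X w r (restr A f)"

text \<open>L^\<infinity>_\<mu>(\<rho>): supremum of the local size \<rho> f A over nonempty A \<subseteq> X
  (all values are nonnegative; the 0 only matters for X = {} where the sup is empty).\<close>
definition Linf :: "'a set \<Rightarrow> (('a \<Rightarrow> real) \<Rightarrow> 'a set \<Rightarrow> real) \<Rightarrow> ('a \<Rightarrow> real) \<Rightarrow> real" where
  "Linf X \<rho> f = Sup (insert 0 ((\<lambda>A. \<rho> f A) ` {A. A \<subseteq> X \<and> A \<noteq> {}}))"

definition superlevel :: "'a set \<Rightarrow> ('a set \<Rightarrow> real) \<Rightarrow> (('a \<Rightarrow> real) \<Rightarrow> 'a set \<Rightarrow> real)
                          \<Rightarrow> ('a \<Rightarrow> real) \<Rightarrow> real \<Rightarrow> real" where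
  "superlevel X \<mu> \<rho> f s = Inf (\<mu> ` {B. B \<subseteq> X \<and> Linf X \<rho> (restr (X - B) f) \<le> s})"

definition Lp_norm :: "'a set \<Rightarrow> ('a set \<Rightarrow> real) \<Rightarrow> (('a \<Rightarrow> real) \<Rightarrow> 'a set \<Rightarrow> real)
                       \<Rightarrow> real \<Rightarrow> ('a \<Rightarrow> real) \<Rightarrow> real" where
  "Lp_norm X \<mu> \<rho> p f =
     (LBINT t:{0<..}. p * t powr (p - 1) * superlevel X \<mu> \<rho> f t) powr (1 / p)"

definition ell_q :: "'a set \<Rightarrow> ('a set \<Rightarrow> real) \<Rightarrow> ('a set \<Rightarrow> real) \<Rightarrow> (('a \<Rightarrow> real) \<Rightarrow> 'a set \<Rightarrow> real)
                      \<Rightarrow> real \<Rightarrow> ('a \<Rightarrow> real) \<Rightarrow> 'a set \<Rightarrow> real" where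
  "ell_q X \<mu> \<nu> \<rho> q f A = \<mu> A powr (- 1 / q) * Lp_norm X \<nu> \<rho> q (restr A f)"

end

theory Submission
  imports Defs
begin

text \<open>
  Both levels are outer \<open>L\<^sup>p\<close> norms of a size \<open>\<rho>(g)(A) = m(A) powr (-1/s) * M(g 1\<^sub>A)\<close>.
  The sets \<open>E\<^sub>k\<close> are chosen greedily from the top level downwards: at level \<open>2\<^sup>k\<close> one
  removes the union of a disjoint family of sets of size \<open>> 2\<^sup>k\<close> whose union has maximal
  cardinality. Maximality gives (b) and hence (c); the lower bound (a) and the measure bound
  (d) only use that \<open>M powr s\<close> is quasi-superadditive and quasi-subadditive over disjoint
  sets. Comparing the layer-cake integral of the \<open>L\<^sup>p\<close> norm with dyadic step functions then
  gives the two-sided bounds.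

  At the inner level \<open>M powr r\<close> is a sum over points, hence additive. For such sizes the
  decomposition itself shows that the \<open>q\<close>-th power of the outer \<open>L\<^sup>q\<close> norm is
  quasi-subadditive and, if \<open>r \<le> q\<close>, quasi-superadditive: half of the mass of a level-\<open>k\<close>
  band of a piece lies in bands of the whole function of level at least \<open>k\<close> minus a fixed gap,
  and \<open>2 powr (k * (q - r))\<close> increases with \<open>k\<close>. So the construction applies once more at
  the outer level, with exponent \<open>q\<close>.
\<close>

lemma powr_le_powr_iff_base:
  fixes x y a :: real
  assumes "0 \<le> x" "0 \<le> y" "0 < a"
  shows "x powr a \<le> y powr a \<longleftrightarrow> x \<le> y"
  using assms powr_mono2[of a x y] powr_less_mono2[of a y x] by (auto simp: not_le[symmetric])

lemma restr_restr: "restr A (restr B g) = restr (A \<inter> B) g"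
  by (auto simp: restr_def)

lemma restr_empty: "restr {} g = (\<lambda>_. 0)"
  by (auto simp: restr_def)

lemma restr_zero: "restr A (\<lambda>_. 0) = (\<lambda>_. 0)"
  by (auto simp: restr_def)

lemma restr_cong_support:
  assumes "A \<inter> {x. g x \<noteq> 0} = B \<inter> {x. g x \<noteq> 0}"
  shows "restr A g = restr B g"
  using assms by (auto simp: restr_def fun_eq_iff)

lemma supp_on_restr_diff: "supp_on X (restr (X - F) f) = supp_on X f - F"
  by (auto simp: supp_on_def restr_def)

lemma has_bochner_integral_powr_density_0:
  fixes p b :: real
  assumes p: "0 < p" and b: "0 \<le> b"
  shows "has_bochner_integral lborel (\<lambda>t. indicator {0<..b} t * (p * t powr (p - 1))) (b powr p)"
proof -
  have "((\<lambda>x. x powr (p - 1)) has_integral (b powr (p - 1 + 1) / (p - 1 + 1))) {0..b}"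
    by (rule has_integral_powr_from_0) (use p b in auto)
  then have "((\<lambda>x. p * x powr (p - 1)) has_integral (p * (b powr p / p))) {0..b}"
    by (intro has_integral_mult_right) simp
  then have "((\<lambda>x. p * x powr (p - 1)) has_integral b powr p) {0..b}"
    using p by simp
  then have HK: "((\<lambda>x. p * x powr (p - 1)) has_integral b powr p) {0<..b}"
    by (subst has_integral_spike_set_eq[where T = "{0..b}"])
       (auto intro!: negligible_subset[OF negligible_empty])
  have abs_int: "(\<lambda>x. p * x powr (p - 1)) absolutely_integrable_on {0<..b}"
    by (rule nonnegative_absolutely_integrable_1) (use HK p in \<open>auto simp: integrable_on_def\<close>)
  have meas: "(\<lambda>t. indicator {0<..b} t * (p * t powr (p - 1))) \<in> borel_measurable lborel"
    by measurable
  have int: "integrable lebesgue (\<lambda>t. indicator {0<..b} t * (p * t powr (p - 1)))"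
    using abs_int by (simp add: set_integrable_def)
  have "(LINT t:{0<..b} | lebesgue. p * t powr (p - 1)) = integral {0<..b} (\<lambda>t. p * t powr (p - 1))"
    by (rule set_lebesgue_integral_eq_integral(2)) (use abs_int in simp)
  also have "\<dots> = b powr p"
    using HK by (rule integral_unique)
  finally have "integral\<^sup>L lebesgue (\<lambda>t. indicator {0<..b} t * (p * t powr (p - 1))) = b powr p"
    unfolding set_lebesgue_integral_def by simp
  with int show ?thesis
    using integral_completion[OF meas] integrable_completion[OF meas]
    by (simp add: has_bochner_integral_iff)
qed

lemma has_bochner_integral_powr_density:
  fixes p a b :: real
  assumes "0 < p" "0 \<le> a" "a \<le> b"
  shows "has_bochner_integral lborel (\<lambda>t. indicator {a<..b} t * (p * t powr (p - 1)))
           (b powr p - a powr p)"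
proof -
  have "(\<lambda>t. indicator {a<..b} t * (p * t powr (p - 1))) =
      (\<lambda>t. indicator {0<..b} t * (p * t powr (p - 1)) - indicator {0<..a} t * (p * t powr (p - 1)))"
    using assms by (intro ext) (auto simp: indicator_def)
  moreover have "has_bochner_integral lborel (\<lambda>t. indicator {0<..b} t * (p * t powr (p - 1))
      - indicator {0<..a} t * (p * t powr (p - 1))) (b powr p - a powr p)"
    using assms by (intro has_bochner_integral_diff has_bochner_integral_powr_density_0) auto
  ultimately show ?thesis
    by (simp only:)
qed

lemma has_bochner_integral_powr_steps:
  fixes p :: real and \<alpha> \<beta> a :: "'b \<Rightarrow> real"
  assumes "0 < p" "\<And>k. k \<in> K \<Longrightarrow> 0 \<le> \<alpha> k \<and> \<alpha> k \<le> \<beta> k"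
  shows "has_bochner_integral lborel
           (\<lambda>t. \<Sum>k\<in>K. a k * (indicator {\<alpha> k<..\<beta> k} t * (p * t powr (p - 1))))
           (\<Sum>k\<in>K. a k * (\<beta> k powr p - \<alpha> k powr p))"
proof (rule has_bochner_integral_sum)
  fix k assume "k \<in> K"
  then show "has_bochner_integral lborel (\<lambda>t. a k * (indicator {\<alpha> k<..\<beta> k} t * (p * t powr (p - 1))))
      (a k * (\<beta> k powr p - \<alpha> k powr p))"
    using assms by (intro has_bochner_integral_mult_right has_bochner_integral_powr_density) auto
qed

lemma sum_le_at_most_one_nonzero:
  fixes f :: "'b \<Rightarrow> real"
  assumes "finite A" and unique: "\<And>a b. a \<in> A \<Longrightarrow> b \<in> A \<Longrightarrow> P a \<Longrightarrow> P b \<Longrightarrow> a = b"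
    and le: "\<And>a. a \<in> A \<Longrightarrow> P a \<Longrightarrow> f a \<le> B"
    and "\<And>a. a \<in> A \<Longrightarrow> \<not> P a \<Longrightarrow> f a = 0" and "0 \<le> B"
  shows "sum f A \<le> B"
proof -
  have "sum f A = sum f {a\<in>A. P a}"
    using assms by (intro sum.mono_neutral_right) auto
  moreover consider "{a\<in>A. P a} = {}" | a where "{a\<in>A. P a} = {a}"
    using unique by blast
  then have "sum f {a\<in>A. P a} \<le> B"
  proof cases
    case 1
    show ?thesis unfolding 1 using \<open>0 \<le> B\<close> by simp
  next
    case (2 a)
    then have "a \<in> A" "P a" by auto
    with 2 le show ?thesis by simp
  qed
  ultimately show ?thesis
    by simp
qed

section \<open>Sizes on a finite set and their outer \<open>L\<^sup>p\<close> norms\<close>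

locale outer_size =
  fixes X :: "'a set" and m :: "'a set \<Rightarrow> real" and M :: "('a \<Rightarrow> real) \<Rightarrow> real" and s :: real
  assumes finite_X: "finite X"
    and outer_measure: "outer_measure_on X m"
    and s_pos: "0 < s"
    and M_nonneg: "\<And>g. 0 \<le> M g"
    and M_zero: "M (\<lambda>_. 0) = 0"
    and M_restr_mono: "\<And>g D D'. D \<subseteq> D' \<Longrightarrow> D' \<subseteq> X \<Longrightarrow> M (restr D g) \<le> M (restr D' g)"
    and M_point_pos: "\<And>g x. x \<in> X \<Longrightarrow> g x \<noteq> 0 \<Longrightarrow> 0 < M (restr {x} g)"
begin

definition rho :: "('a \<Rightarrow> real) \<Rightarrow> 'a set \<Rightarrow> real" where
  "rho g A = m A powr (- 1 / s) * M (restr A g)"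

abbreviation Linf_rho :: "('a \<Rightarrow> real) \<Rightarrow> real" where
  "Linf_rho g \<equiv> Linf X rho g"

abbreviation level_rho :: "('a \<Rightarrow> real) \<Rightarrow> real \<Rightarrow> real" where
  "level_rho g t \<equiv> superlevel X m rho g t"

definition Lp_pow :: "real \<Rightarrow> ('a \<Rightarrow> real) \<Rightarrow> real" where
  "Lp_pow p g = (LBINT t:{0<..}. p * t powr (p - 1) * level_rho g t)"

lemma m_empty: "m {} = 0"
  using outer_measure by (simp add: outer_measure_on_def)

lemma m_mono: "A \<subseteq> B \<Longrightarrow> B \<subseteq> X \<Longrightarrow> m A \<le> m B"
  using outer_measure by (simp add: outer_measure_on_def)

lemma m_nonneg: "A \<subseteq> X \<Longrightarrow> 0 \<le> m A"
  using m_mono[of "{}" A] m_empty by simp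

lemma m_pos: "A \<subseteq> X \<Longrightarrow> A \<noteq> {} \<Longrightarrow> 0 < m A"
  using outer_measure by (simp add: outer_measure_on_def)

lemma m_Un_le: "A \<subseteq> X \<Longrightarrow> B \<subseteq> X \<Longrightarrow> m (A \<union> B) \<le> m A + m B"
  using outer_measure by (simp add: outer_measure_on_def)

lemma m_UN_le: "finite I \<Longrightarrow> (\<And>i. i \<in> I \<Longrightarrow> D i \<subseteq> X) \<Longrightarrow> m (\<Union>i\<in>I. D i) \<le> (\<Sum>i\<in>I. m (D i))"
proof (induction I rule: finite_induct)
  case empty
  then show ?case by (simp add: m_empty)
next
  case (insert a I)
  have "m (\<Union>i\<in>insert a I. D i) \<le> m (D a) + m (\<Union>i\<in>I. D i)"
    using insert.prems by (simp add: m_Un_le UN_least)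
  with insert show ?case
    by simp
qed

lemma rho_empty: "rho g {} = 0"
  unfolding rho_def by (simp add: m_empty)

lemma rho_zero: "rho (\<lambda>_. 0) A = 0"
  unfolding rho_def by (simp add: restr_zero M_zero)

lemma rho_restr_X: "A \<subseteq> X \<Longrightarrow> rho (restr X g) A = rho g A"
  unfolding rho_def restr_restr by (simp add: Int_absorb2)

lemma rho_le_iff:
  assumes A: "A \<subseteq> X" "A \<noteq> {}" and l: "0 \<le> l"
  shows "rho g A \<le> l \<longleftrightarrow> M (restr A g) powr s \<le> l powr s * m A"
proof -
  have mA: "0 < m A"
    using m_pos A by auto
  have "rho g A \<le> l \<longleftrightarrow> M (restr A g) \<le> l * m A powr (1 / s)"
    using mA by (simp add: rho_def powr_minus_divide divide_le_eq mult.commute)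
  also have "\<dots> \<longleftrightarrow> M (restr A g) powr s \<le> (l * m A powr (1 / s)) powr s"
    using M_nonneg mA l s_pos by (intro powr_le_powr_iff_base[symmetric]) auto
  also have "(l * m A powr (1 / s)) powr s = l powr s * m A"
    using mA l s_pos by (simp add: powr_mult powr_powr)
  finally show ?thesis .
qed

lemma rho_gt_iff:
  assumes "A \<subseteq> X" "A \<noteq> {}" "0 \<le> l"
  shows "l < rho g A \<longleftrightarrow> l powr s * m A < M (restr A g) powr s"
  using rho_le_iff[OF assms, of g] by linarith

lemma rho_restr_mono: "D \<subseteq> D' \<Longrightarrow> A \<subseteq> X \<Longrightarrow> rho (restr D g) A \<le> rho (restr D' g) A"
  unfolding rho_def restr_restr by (intro mult_left_mono M_restr_mono) auto

lemma rho_pos_imp_support: "0 < rho g A \<Longrightarrow> A \<inter> {x. g x \<noteq> 0} \<noteq> {}"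
  using restr_cong_support[of A g "{}"] by (auto simp: rho_def restr_empty M_zero)

lemma Linf_rho_eq_Max: "Linf_rho g = Max (insert 0 (rho g ` {A. A \<subseteq> X \<and> A \<noteq> {}}))"
  unfolding Linf_def using finite_X by (intro cSup_eq_Max) auto

lemma Linf_rho_le_iff: "Linf_rho g \<le> l \<longleftrightarrow> 0 \<le> l \<and> (\<forall>A. A \<subseteq> X \<longrightarrow> A \<noteq> {} \<longrightarrow> rho g A \<le> l)"
  unfolding Linf_rho_eq_Max using finite_X by (auto simp: Max_le_iff)

lemma Linf_rho_ge: "A \<subseteq> X \<Longrightarrow> rho g A \<le> Linf_rho g"
  unfolding Linf_rho_eq_Max using finite_X
  by (cases "A = {}") (auto simp: rho_empty intro!: Max_ge)

lemma Linf_rho_nonneg: "0 \<le> Linf_rho g"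
  unfolding Linf_rho_eq_Max using finite_X by (auto intro!: Max_ge)

lemma Linf_rho_zero: "Linf_rho (\<lambda>_. 0) = 0"
  using Linf_rho_le_iff[of "\<lambda>_. 0" 0] Linf_rho_nonneg[of "\<lambda>_. 0"] by (simp add: rho_zero)

lemma Linf_rho_restr_X: "Linf_rho (restr X g) = Linf_rho g"
proof -
  have "rho (restr X g) ` {A. A \<subseteq> X \<and> A \<noteq> {}} = rho g ` {A. A \<subseteq> X \<and> A \<noteq> {}}"
    by (rule image_cong) (auto simp: rho_restr_X)
  then show ?thesis
    unfolding Linf_rho_eq_Max by simp
qed

lemma Linf_rho_restr_mono: "D \<subseteq> D' \<Longrightarrow> Linf_rho (restr D g) \<le> Linf_rho (restr D' g)"
  using rho_restr_mono Linf_rho_le_iff Linf_rho_nonneg Linf_rho_ge by (meson order_trans)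

lemma M_powr_le_Linf_rho:
  assumes g: "Linf_rho g \<le> l" and CB: "C \<subseteq> B" "B \<subseteq> X"
  shows "M (restr C g) powr s \<le> l powr s * m B"
proof (cases "C = {}")
  case True
  then show ?thesis
    using m_nonneg[OF CB(2)] by (simp add: restr_empty M_zero)
next
  case False
  have l: "0 \<le> l"
    using Linf_rho_nonneg g by (rule order_trans)
  have "rho g C \<le> l"
    using Linf_rho_ge[of C g] g CB by (meson order_trans subset_trans)
  then have "M (restr C g) powr s \<le> l powr s * m C"
    using rho_le_iff[of C l g] False CB l by auto
  also have "\<dots> \<le> l powr s * m B"
    using m_mono[OF CB] by (intro mult_left_mono) auto
  finally show ?thesis .
qed

lemma level_rho_eq_Min:
  assumes "0 \<le> t"
  shows "level_rho g t = Min (m ` {B. B \<subseteq> X \<and> Linf_rho (restr (X - B) g) \<le> t})"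
proof -
  have "X \<in> {B. B \<subseteq> X \<and> Linf_rho (restr (X - B) g) \<le> t}"
    using assms by (simp add: restr_empty Linf_rho_zero)
  then show ?thesis
    unfolding superlevel_def using finite_X by (intro cInf_eq_Min) auto
qed

lemma level_rho_le_measure: "B \<subseteq> X \<Longrightarrow> Linf_rho (restr (X - B) g) \<le> t \<Longrightarrow> level_rho g t \<le> m B"
  using Linf_rho_nonneg[of "restr (X - B) g"] level_rho_eq_Min[of t g] finite_X
  by (auto intro!: Min_le)

lemma level_rho_attained:
  assumes "0 \<le> t"
  obtains B where "B \<subseteq> X" "Linf_rho (restr (X - B) g) \<le> t" "level_rho g t = m B"
proof -
  let ?\<B> = "{B. B \<subseteq> X \<and> Linf_rho (restr (X - B) g) \<le> t}"
  have "X \<in> ?\<B>"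
    using assms by (simp add: restr_empty Linf_rho_zero)
  then have "Min (m ` ?\<B>) \<in> m ` ?\<B>"
    using finite_X by (intro Min_in) auto
  then obtain B where "B \<in> ?\<B>" "Min (m ` ?\<B>) = m B"
    by blast
  with that show ?thesis
    using level_rho_eq_Min[OF assms, of g] by auto
qed

lemma level_rho_nonneg: "0 \<le> t \<Longrightarrow> 0 \<le> level_rho g t"
  by (rule level_rho_attained[of t g]) (auto simp: m_nonneg)

lemma level_rho_le_m_X: "0 \<le> t \<Longrightarrow> level_rho g t \<le> m X"
  using level_rho_le_measure[of X g t] by (simp add: restr_empty Linf_rho_zero)

lemma level_rho_antimono:
  assumes "0 \<le> t" "t \<le> t'"
  shows "level_rho g t' \<le> level_rho g t"
proof -
  obtain B where "B \<subseteq> X" "Linf_rho (restr (X - B) g) \<le> t" "level_rho g t = m B"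
    using level_rho_attained[OF assms(1)] by blast
  with assms(2) show ?thesis
    using level_rho_le_measure[of B g t'] by simp
qed

lemma level_rho_eq_0: "Linf_rho g \<le> t \<Longrightarrow> level_rho g t = 0"
  using level_rho_le_measure[of "{}" g t] level_rho_nonneg[of t g] Linf_rho_nonneg[of g]
  by (simp add: Linf_rho_restr_X m_empty)

lemma level_rho_restr_mono:
  assumes "D \<subseteq> D'" "0 \<le> t"
  shows "level_rho (restr D g) t \<le> level_rho (restr D' g) t"
proof -
  obtain B where B: "B \<subseteq> X" "Linf_rho (restr (X - B) (restr D' g)) \<le> t"
    "level_rho (restr D' g) t = m B"
    using level_rho_attained[OF assms(2)] by blast
  have "Linf_rho (restr (X - B) (restr D g)) \<le> Linf_rho (restr (X - B) (restr D' g))"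
    unfolding restr_restr using assms(1) by (intro Linf_rho_restr_mono) auto
  then show ?thesis
    using B level_rho_le_measure[of B "restr D g" t] by simp
qed

lemma level_rho_integrand_measurable:
  "(\<lambda>t. indicator {0<..} t *\<^sub>R (p * t powr (p - 1) * level_rho g t)) \<in> borel_measurable lborel"
proof -
  define h where "h t = (if 0 < t then level_rho g t else m X)" for t
  have "mono (\<lambda>t. - h t)"
  proof
    fix x y :: real
    assume "x \<le> y"
    then show "- h x \<le> - h y"
      using level_rho_antimono[of x y g] level_rho_le_m_X[of y g] by (auto simp: h_def)
  qed
  then have "(\<lambda>t. - (- h t)) \<in> borel_measurable borel"
    using borel_measurable_mono borel_measurable_uminus by blast
  then have [measurable]: "h \<in> borel_measurable borel"
    by simp
  have "(\<lambda>t. indicator {0<..} t *\<^sub>R (p * t powr (p - 1) * h t)) \<in> borel_measurable borel"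
    by measurable
  moreover have "(\<lambda>t. indicator {0<..} t *\<^sub>R (p * t powr (p - 1) * h t)) =
      (\<lambda>t. indicator {0<..} t *\<^sub>R (p * t powr (p - 1) * level_rho g t))"
    by (auto simp: h_def indicator_def fun_eq_iff)
  ultimately show ?thesis
    by (metis measurable_lborel2)
qed

lemma level_rho_integrable:
  assumes p: "0 < p"
  shows "integrable lborel (\<lambda>t. indicator {0<..} t *\<^sub>R (p * t powr (p - 1) * level_rho g t))"
proof (rule Bochner_Integration.integrable_bound[OF _ level_rho_integrand_measurable AE_I2])
  show "integrable lborel (\<lambda>t. m X * (indicator {0<..Linf_rho g} t * (p * t powr (p - 1))))"
    using has_bochner_integral_powr_density_0[OF p Linf_rho_nonneg]
    by (intro integrable_mult_right) (rule integrable.intros)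
  fix t :: real
  have dens: "0 \<le> p * t powr (p - 1)" and mX: "0 \<le> m X"
    using p m_nonneg by auto
  show "norm (indicator {0<..} t *\<^sub>R (p * t powr (p - 1) * level_rho g t))
      \<le> norm (m X * (indicator {0<..Linf_rho g} t * (p * t powr (p - 1))))"
  proof (cases "0 < t \<and> t \<le> Linf_rho g")
    case True
    then have "p * t powr (p - 1) * level_rho g t \<le> p * t powr (p - 1) * m X"
      using dens level_rho_le_m_X[of t g] by (intro mult_left_mono) auto
    with True dens mX show ?thesis
      using level_rho_nonneg[of t g] by (simp add: abs_mult abs_of_pos[OF p] mult.commute)
  next
    case False
    then have zero: "indicator {0<..} t *\<^sub>R (p * t powr (p - 1) * level_rho g t) = 0"
      using level_rho_eq_0[of g t] by (auto simp: indicator_def)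
    show ?thesis
      unfolding zero by simp
  qed
qed

lemma Lp_pow_nonneg: "0 < p \<Longrightarrow> 0 \<le> Lp_pow p g"
  unfolding Lp_pow_def set_lebesgue_integral_def
  by (intro Bochner_Integration.integral_nonneg) (auto simp: indicator_def level_rho_nonneg)

lemma Lp_norm_powr: "0 < p \<Longrightarrow> Lp_norm X m rho p g powr p = Lp_pow p g"
  unfolding Lp_norm_def Lp_pow_def[symmetric] using Lp_pow_nonneg[of p g] by (simp add: powr_powr)

lemma Lp_norm_nonneg: "0 \<le> Lp_norm X m rho p g"
  unfolding Lp_norm_def by simp

lemma Lp_pow_le_steps:
  assumes p: "0 < p" and ab: "\<And>k. k \<in> K \<Longrightarrow> 0 \<le> \<alpha> k \<and> \<alpha> k \<le> \<beta> k"
    and le: "\<And>t. 0 < t \<Longrightarrow> level_rho g t \<le> (\<Sum>k\<in>K. a k * indicator {\<alpha> k<..\<beta> k} t)"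
  shows "Lp_pow p g \<le> (\<Sum>k\<in>K. a k * (\<beta> k powr p - \<alpha> k powr p))"
proof -
  note steps = has_bochner_integral_powr_steps[where K = K and \<alpha> = \<alpha> and \<beta> = \<beta> and a = a, OF p ab]
  have "Lp_pow p g \<le> integral\<^sup>L lborel
      (\<lambda>t. \<Sum>k\<in>K. a k * (indicator {\<alpha> k<..\<beta> k} t * (p * t powr (p - 1))))"
    unfolding Lp_pow_def set_lebesgue_integral_def
  proof (rule Bochner_Integration.integral_mono[OF level_rho_integrable[OF p]
        integrable.intros[OF steps]])
    fix t :: real
    show "indicator {0<..} t *\<^sub>R (p * t powr (p - 1) * level_rho g t)
        \<le> (\<Sum>k\<in>K. a k * (indicator {\<alpha> k<..\<beta> k} t * (p * t powr (p - 1))))"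
    proof (cases "0 < t")
      case True
      then have "p * t powr (p - 1) * level_rho g t
          \<le> p * t powr (p - 1) * (\<Sum>k\<in>K. a k * indicator {\<alpha> k<..\<beta> k} t)"
        using le p by (intro mult_left_mono) auto
      with True show ?thesis
        by (simp add: sum_distrib_left mult_ac)
    next
      case False
      then have "indicator {\<alpha> k<..\<beta> k} t = (0::real)" if "k \<in> K" for k
        using ab[OF that] by (auto simp: indicator_def)
      with False show ?thesis
        by simp
    qed
  qed
  also have "\<dots> = (\<Sum>k\<in>K. a k * (\<beta> k powr p - \<alpha> k powr p))"
    using steps by (rule has_bochner_integral_integral_eq)
  finally show ?thesis .
qed

lemma steps_le_Lp_pow:
  assumes p: "0 < p" and ab: "\<And>k. k \<in> K \<Longrightarrow> 0 \<le> \<alpha> k \<and> \<alpha> k \<le> \<beta> k"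
    and le: "\<And>t. 0 < t \<Longrightarrow> (\<Sum>k\<in>K. a k * indicator {\<alpha> k<..\<beta> k} t) \<le> level_rho g t"
  shows "(\<Sum>k\<in>K. a k * (\<beta> k powr p - \<alpha> k powr p)) \<le> Lp_pow p g"
proof -
  note steps = has_bochner_integral_powr_steps[where K = K and \<alpha> = \<alpha> and \<beta> = \<beta> and a = a, OF p ab]
  have "(\<Sum>k\<in>K. a k * (\<beta> k powr p - \<alpha> k powr p)) = integral\<^sup>L lborel
      (\<lambda>t. \<Sum>k\<in>K. a k * (indicator {\<alpha> k<..\<beta> k} t * (p * t powr (p - 1))))"
    using steps by (rule has_bochner_integral_integral_eq[symmetric])
  also have "\<dots> \<le> Lp_pow p g"
    unfolding Lp_pow_def set_lebesgue_integral_def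
  proof (rule Bochner_Integration.integral_mono[OF integrable.intros[OF steps]
        level_rho_integrable[OF p]])
    fix t :: real
    show "(\<Sum>k\<in>K. a k * (indicator {\<alpha> k<..\<beta> k} t * (p * t powr (p - 1))))
        \<le> indicator {0<..} t *\<^sub>R (p * t powr (p - 1) * level_rho g t)"
    proof (cases "0 < t")
      case True
      then have "p * t powr (p - 1) * (\<Sum>k\<in>K. a k * indicator {\<alpha> k<..\<beta> k} t)
          \<le> p * t powr (p - 1) * level_rho g t"
        using le p by (intro mult_left_mono) auto
      with True show ?thesis
        by (simp add: sum_distrib_left mult_ac)
    next
      case False
      then have "indicator {\<alpha> k<..\<beta> k} t = (0::real)" if "k \<in> K" for k
        using ab[OF that] by (auto simp: indicator_def)
      with False show ?thesis
        by simp
    qed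
  qed
  finally show ?thesis .
qed

lemma dyadic_steps_le_level_rho:
  assumes K: "finite K" and c: "0 < c" and t: "0 < t"
  shows "(\<Sum>k\<in>K. level_rho g (c * 2 powr real_of_int k)
           * indicator {c * 2 powr real_of_int k / 2<..c * 2 powr real_of_int k} t) \<le> level_rho g t"
proof (rule sum_le_at_most_one_nonzero[OF K,
      where P = "\<lambda>k. t \<in> {c * 2 powr real_of_int k / 2<..c * 2 powr real_of_int k}"])
  have gap: "c * 2 powr real_of_int k \<le> c * 2 powr real_of_int j / 2" if "k < j" for k j
  proof -
    have "2 * (c * 2 powr real_of_int k) = c * 2 powr (real_of_int k + 1)"
      by (simp add: powr_add)
    also have "\<dots> \<le> c * 2 powr real_of_int j"
      using that c by (intro mult_left_mono powr_mono) auto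
    finally show ?thesis
      by simp
  qed
  fix k j
  assume "t \<in> {c * 2 powr real_of_int k / 2<..c * 2 powr real_of_int k}"
    "t \<in> {c * 2 powr real_of_int j / 2<..c * 2 powr real_of_int j}"
  with gap[of k j] gap[of j k] show "k = j"
    by (cases k j rule: linorder_cases) auto
next
  fix k
  assume "t \<in> {c * 2 powr real_of_int k / 2<..c * 2 powr real_of_int k}"
  then show "level_rho g (c * 2 powr real_of_int k)
      * indicator {c * 2 powr real_of_int k / 2<..c * 2 powr real_of_int k} t \<le> level_rho g t"
    using level_rho_antimono[of t "c * 2 powr real_of_int k" g] t by simp
qed (use level_rho_nonneg t in auto)

lemma dyadic_level_sum_le_Lp_pow:
  assumes p: "0 < p" and K: "finite K" and c: "0 < c"
  shows "(\<Sum>k\<in>K. 2 powr (real_of_int k * p) * level_rho g (c * 2 powr real_of_int k))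
    \<le> c powr (- p) / (1 - 2 powr (- p)) * Lp_pow p g"
proof -
  define \<beta> where "\<beta> k = c * 2 powr real_of_int k" for k :: int
  have \<beta>_pos: "0 < \<beta> k" for k
    using c by (simp add: \<beta>_def)
  have q: "0 < 1 - 2 powr (- p)"
    using powr_less_one[of 2 "- p"] p by simp
  have "(\<Sum>k\<in>K. level_rho g (\<beta> k) * (\<beta> k powr p - (\<beta> k / 2) powr p)) \<le> Lp_pow p g"
    using \<beta>_pos dyadic_steps_le_level_rho[OF K c]
    by (intro steps_le_Lp_pow[OF p]) (auto simp: \<beta>_def less_imp_le)
  moreover have "\<beta> k powr p - (\<beta> k / 2) powr p = \<beta> k powr p * (1 - 2 powr (- p))" for k
    using \<beta>_pos[of k] by (simp add: powr_divide powr_minus_divide algebra_simps)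
  moreover have "\<beta> k powr p = c powr p * 2 powr (real_of_int k * p)" for k
    using c by (simp add: \<beta>_def powr_mult powr_powr)
  ultimately have "c powr p * (1 - 2 powr (- p)) *
      (\<Sum>k\<in>K. 2 powr (real_of_int k * p) * level_rho g (\<beta> k)) \<le> Lp_pow p g"
    by (simp add: sum_distrib_left mult_ac)
  then have "(\<Sum>k\<in>K. 2 powr (real_of_int k * p) * level_rho g (\<beta> k))
      \<le> Lp_pow p g / (c powr p * (1 - 2 powr (- p)))"
    using c q by (simp add: pos_le_divide_eq mult.commute)
  also have "\<dots> = c powr (- p) / (1 - 2 powr (- p)) * Lp_pow p g"
    by (simp add: powr_minus field_simps)
  finally show ?thesis
    by (simp add: \<beta>_def)
qed

lemma Lp_pow_restr_mono:
  assumes p: "0 < p" and D: "D \<subseteq> D'"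
  shows "Lp_pow p (restr D g) \<le> Lp_pow p (restr D' g)"
  unfolding Lp_pow_def set_lebesgue_integral_def
proof (rule Bochner_Integration.integral_mono[OF level_rho_integrable[OF p] level_rho_integrable[OF p]])
  fix t :: real
  show "indicator {0<..} t *\<^sub>R (p * t powr (p - 1) * level_rho (restr D g) t)
      \<le> indicator {0<..} t *\<^sub>R (p * t powr (p - 1) * level_rho (restr D' g) t)"
    using level_rho_restr_mono[OF D, of t g] p by (cases "0 < t") (auto intro!: mult_left_mono)
qed

lemma Lp_norm_restr_mono:
  assumes p: "0 < p" and D: "D \<subseteq> D'"
  shows "Lp_norm X m rho p (restr D g) \<le> Lp_norm X m rho p (restr D' g)"
proof -
  have "Lp_norm X m rho p (restr D g) powr p \<le> Lp_norm X m rho p (restr D' g) powr p"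
    using Lp_pow_restr_mono[OF assms, of g] by (simp add: Lp_norm_powr[OF p])
  then show ?thesis
    using powr_le_powr_iff_base[OF Lp_norm_nonneg Lp_norm_nonneg p] by blast
qed

lemma Lp_pow_point_pos:
  assumes x: "x \<in> X" and gx: "g x \<noteq> 0" and p: "0 < p"
  shows "0 < Lp_pow p (restr {x} g)"
proof -
  define h where "h = restr {x} g"
  have "0 < rho h {x}"
    unfolding rho_def h_def restr_restr using M_point_pos[of x g, OF x gx] m_pos[of "{x}"] x by simp
  define t0 where "t0 = rho h {x} / 2"
  have t0: "0 < t0" "t0 < rho h {x}"
    using \<open>0 < rho h {x}\<close> by (auto simp: t0_def)
  obtain B where B: "B \<subseteq> X" "Linf_rho (restr (X - B) h) \<le> t0" "level_rho h t0 = m B"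
    using level_rho_attained[of t0 h] t0 by auto
  have "x \<in> B"
  proof (rule ccontr)
    assume "x \<notin> B"
    with x have "{x} \<inter> (X - B) = {x}"
      by auto
    then have "restr {x} (restr (X - B) h) = restr {x} h"
      unfolding restr_restr by simp
    then have "rho h {x} \<le> Linf_rho (restr (X - B) h)"
      using Linf_rho_ge[of "{x}" "restr (X - B) h"] x by (simp add: rho_def)
    with t0 B(2) show False
      by simp
  qed
  then have "0 < level_rho h t0 * t0 powr p"
    using B m_pos[of B] t0 by (intro mult_pos_pos) auto
  moreover have "(\<Sum>k\<in>{t0}. level_rho h t0 * (k powr p - 0 powr p)) \<le> Lp_pow p h"
  proof (rule steps_le_Lp_pow[OF p])
    fix t :: real
    assume "0 < t"
    then show "(\<Sum>k\<in>{t0}. level_rho h t0 * indicator {0<..k} t) \<le> level_rho h t"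
      unfolding sum.insert_if[OF finite.emptyI] using level_rho_antimono[of t t0 h] level_rho_nonneg[of t h]
      by (auto simp: indicator_def)
  qed (use t0 in auto)
  ultimately show ?thesis
    unfolding h_def by simp
qed

lemma Lp_norm_point_pos:
  assumes "x \<in> X" "g x \<noteq> 0" "0 < p"
  shows "0 < Lp_norm X m rho p (restr {x} g)"
proof -
  have "0 < Lp_norm X m rho p (restr {x} g) powr p"
    using Lp_pow_point_pos[of x g p, OF assms] Lp_norm_powr[OF assms(3)] by simp
  then show ?thesis
    using Lp_norm_nonneg[of p "restr {x} g"] by (cases "Lp_norm X m rho p (restr {x} g) = 0") auto
qed

lemma Lp_pow_zero: "Lp_pow p (\<lambda>_. 0) = 0"
proof -
  have "(\<lambda>t. indicator {0<..} t *\<^sub>R (p * t powr (p - 1) * level_rho (\<lambda>_. 0) t)) = (\<lambda>t. 0)"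
    using level_rho_eq_0[of "\<lambda>_. 0"] by (auto simp: Linf_rho_zero indicator_def fun_eq_iff)
  then show ?thesis
    unfolding Lp_pow_def set_lebesgue_integral_def by simp
qed

lemma Lp_norm_zero: "Lp_norm X m rho p (\<lambda>_. 0) = 0"
  unfolding Lp_norm_def Lp_pow_def[symmetric] Lp_pow_zero by simp

lemma outer_size_Lp_norm:
  assumes "outer_measure_on X \<mu>" "0 < q"
  shows "outer_size X \<mu> (Lp_norm X m rho q) q"
  using assms finite_X Lp_norm_nonneg Lp_norm_zero Lp_norm_restr_mono Lp_norm_point_pos
  by unfold_locales auto

end

section \<open>The dyadic decomposition\<close>

lemma powr_minus_inverse_powr:
  fixes K s :: real
  assumes "0 < K" "0 < s"
  shows "(K powr (- 1 / s)) powr s = 1 / K"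
proof -
  have "(K powr (- 1 / s)) powr s = K powr (- 1)"
    using assms by (simp add: powr_powr)
  then show ?thesis
    using assms by (simp add: powr_minus_divide)
qed

definition decomp_c :: "real \<Rightarrow> real \<Rightarrow> real \<Rightarrow> real" where
  "decomp_c s K1 K2 = min (K1 powr (- 1 / s)) ((2 * K2) powr (- 1 / s))"

definition decomp_C :: "real \<Rightarrow> real \<Rightarrow> real \<Rightarrow> real" where
  "decomp_C s K1 K2 = 2 powr (s + 1) * K1 * K2"

definition band_sum_const :: "real \<Rightarrow> real \<Rightarrow> real \<Rightarrow> real \<Rightarrow> real" where
  "band_sum_const s K1 K2 p = decomp_C s K1 K2 * decomp_c s K1 K2 powr (- p) / (1 - 2 powr (- p))"

lemma decomp_c_pos: "0 < K1 \<Longrightarrow> 0 < K2 \<Longrightarrow> 0 < decomp_c s K1 K2"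
  by (simp add: decomp_c_def)

lemma decomp_C_pos: "0 < K1 \<Longrightarrow> 0 < K2 \<Longrightarrow> 0 < decomp_C s K1 K2"
  by (simp add: decomp_C_def)

lemma band_sum_const_pos: "0 < p \<Longrightarrow> 0 < K1 \<Longrightarrow> 0 < K2 \<Longrightarrow> 0 < band_sum_const s K1 K2 p"
  using powr_less_one[of 2 "- p"] decomp_c_pos[of K1 K2 s] decomp_C_pos[of K1 K2 s]
  by (simp add: band_sum_const_def)

lemma decomp_c_powr_le:
  assumes "0 < s" "0 < K1" "0 < K2"
  shows "decomp_c s K1 K2 powr s \<le> 1 / (2 * K2)"
proof -
  have "decomp_c s K1 K2 powr s \<le> ((2 * K2) powr (- 1 / s)) powr s"
    using assms decomp_c_pos[of K1 K2 s] by (intro powr_mono2) (auto simp: decomp_c_def)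
  also have "\<dots> = 1 / (2 * K2)"
    using assms by (intro powr_minus_inverse_powr) auto
  finally show ?thesis .
qed

locale quasi_additive_size = outer_size +
  fixes K1 K2 :: real
  assumes K1_pos: "0 < K1" and K2_pos: "0 < K2"
    \<comment> \<open>families indexed by sets suffice; an assumption cannot quantify over index types\<close>
    and M_superadd: "\<And>(I :: 'a set set) D g. finite I \<Longrightarrow>
      (\<And>i j. i \<in> I \<Longrightarrow> j \<in> I \<Longrightarrow> i \<noteq> j \<Longrightarrow> D i \<inter> D j = {}) \<Longrightarrow> (\<And>i. i \<in> I \<Longrightarrow> D i \<subseteq> X) \<Longrightarrow>
      (\<Sum>i\<in>I. M (restr (D i) g) powr s) \<le> K1 * M (restr (\<Union>i\<in>I. D i) g) powr s"
    and M_subadd: "\<And>D1 D2 g. D1 \<inter> D2 = {} \<Longrightarrow> D1 \<subseteq> X \<Longrightarrow> D2 \<subseteq> X \<Longrightarrow>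
      M (restr (D1 \<union> D2) g) powr s \<le> K2 * (M (restr D1 g) powr s + M (restr D2 g) powr s)"
begin

abbreviation cc :: real where
  "cc \<equiv> decomp_c s K1 K2"

abbreviation CC :: real where
  "CC \<equiv> decomp_C s K1 K2"

lemma cc_pos: "0 < cc"
  using K1_pos K2_pos by (rule decomp_c_pos)

lemma CC_pos: "0 < CC"
  using K1_pos K2_pos by (rule decomp_C_pos)

definition admissible_family :: "('a \<Rightarrow> real) \<Rightarrow> real \<Rightarrow> 'a set set \<Rightarrow> bool" where
  "admissible_family g lam \<A> \<longleftrightarrow>
     finite \<A> \<and> disjoint \<A> \<and> (\<forall>A\<in>\<A>. A \<noteq> {} \<and> A \<subseteq> supp_on X g \<and> lam < rho g A)"

lemma admissible_familyD:
  assumes "admissible_family g lam \<A>" "A \<in> \<A>"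
  shows "A \<noteq> {}" "A \<subseteq> supp_on X g" "A \<subseteq> X" "lam < rho g A"
  using assms by (auto simp: admissible_family_def supp_on_def)

lemma admissible_family_disjoint:
  "admissible_family g lam \<A> \<Longrightarrow> A \<in> \<A> \<Longrightarrow> A' \<in> \<A> \<Longrightarrow> A \<noteq> A' \<Longrightarrow> A \<inter> A' = {}"
  by (auto simp: admissible_family_def pairwise_def disjnt_def)

lemma admissible_family_insert:
  assumes "admissible_family g lam \<A>" "A \<noteq> {}" "A \<subseteq> supp_on X g" "lam < rho g A"
    "A \<inter> \<Union>\<A> = {}"
  shows "admissible_family g lam (insert A \<A>)"
  using assms unfolding admissible_family_def by (auto simp: pairwise_insert disjnt_def)

lemma rho_Union_admissible_gt:
  assumes lam: "0 < lam" and adm: "admissible_family g lam \<A>" and ne: "\<A> \<noteq> {}"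
  shows "cc * lam < rho g (\<Union>\<A>)"
proof -
  have fin: "finite \<A>"
    using adm by (simp add: admissible_family_def)
  have AX: "A \<subseteq> X" if "A \<in> \<A>" for A
    using admissible_familyD[OF adm that] by blast
  have EX: "\<Union>\<A> \<subseteq> X" and Ene: "\<Union>\<A> \<noteq> {}"
    using AX ne admissible_familyD(1)[OF adm] by auto
  have "lam powr s * m (\<Union>\<A>) \<le> lam powr s * (\<Sum>A\<in>\<A>. m A)"
    using m_UN_le[OF fin, of "\<lambda>A. A"] AX by (intro mult_left_mono) auto
  also have "\<dots> = (\<Sum>A\<in>\<A>. lam powr s * m A)"
    by (simp add: sum_distrib_left)
  also have "\<dots> < (\<Sum>A\<in>\<A>. M (restr A g) powr s)"
    using rho_gt_iff[of _ lam g] admissible_familyD[OF adm] lam fin ne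
    by (intro sum_strict_mono) auto
  also have "\<dots> \<le> K1 * M (restr (\<Union>\<A>) g) powr s"
    using M_superadd[OF fin, of "\<lambda>A. A" g] admissible_family_disjoint[OF adm] AX by simp
  finally have "lam powr s / K1 * m (\<Union>\<A>) < M (restr (\<Union>\<A>) g) powr s"
    using K1_pos by (simp add: field_simps)
  moreover have "(K1 powr (- 1 / s) * lam) powr s = lam powr s / K1"
  proof -
    have "(K1 powr (- 1 / s) * lam) powr s = (K1 powr (- 1 / s)) powr s * lam powr s"
      using lam by (simp add: powr_mult)
    then show ?thesis
      using powr_minus_inverse_powr[OF K1_pos s_pos] by simp
  qed
  ultimately have "K1 powr (- 1 / s) * lam < rho g (\<Union>\<A>)"
    using rho_gt_iff[OF EX Ene] K1_pos lam by simp
  moreover have "cc * lam \<le> K1 powr (- 1 / s) * lam"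
    using lam by (simp add: decomp_c_def)
  ultimately show ?thesis
    by linarith
qed

lemma large_rho_concentrates:
  assumes lam: "0 < lam" and A: "A \<subseteq> X" "A \<noteq> {}" "lam < rho g A"
    and B: "Linf_rho (restr (X - B) g) \<le> cc * lam"
  shows "lam powr s * m A < 2 * K2 * M (restr (A \<inter> B) g) powr s"
proof -
  have inside: "lam powr s * m A < M (restr A g) powr s"
    using rho_gt_iff[OF A(1,2)] A(3) lam by simp
  have split: "M (restr A g) powr s \<le> K2 * M (restr (A - B) g) powr s + K2 * M (restr (A \<inter> B) g) powr s"
    using M_subadd[of "A - B" "A \<inter> B" g] A(1) by (auto simp: Un_Diff_Int distrib_left)
  have outside: "K2 * M (restr (A - B) g) powr s \<le> lam powr s * m A / 2"
  proof -
    have "restr A (restr (X - B) g) = restr (A - B) g"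
      unfolding restr_restr by (rule arg_cong[where f = "\<lambda>Z. restr Z g"]) (use A(1) in blast)
    then have "M (restr (A - B) g) powr s \<le> (cc * lam) powr s * m A"
      using M_powr_le_Linf_rho[OF B order_refl A(1)] by simp
    also have "\<dots> = cc powr s * lam powr s * m A"
      using cc_pos lam by (simp add: powr_mult)
    also have "\<dots> \<le> 1 / (2 * K2) * lam powr s * m A"
      using decomp_c_powr_le[OF s_pos K1_pos K2_pos] m_nonneg[OF A(1)]
      by (intro mult_right_mono) auto
    finally show ?thesis
      using K2_pos by (simp add: field_simps)
  qed
  have "lam powr s * m A < 2 * (K2 * M (restr (A \<inter> B) g) powr s)"
    using inside split outside by linarith
  then show ?thesis
    by (simp add: mult.assoc)
qed

lemma measure_Union_admissible_le:
  assumes lam: "0 < lam" and adm: "admissible_family g lam \<A>"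
    and g_small: "Linf_rho g \<le> 2 * lam"
    and B: "B \<subseteq> X" "Linf_rho (restr (X - B) g) \<le> cc * lam"
  shows "m (\<Union>\<A>) \<le> CC * m B"
proof -
  have fin: "finite \<A>"
    using adm by (simp add: admissible_family_def)
  have AX: "A \<subseteq> X" if "A \<in> \<A>" for A
    using admissible_familyD[OF adm that] by blast
  have superadd: "(\<Sum>A\<in>\<A>. M (restr (A \<inter> B) g) powr s)
      \<le> K1 * M (restr (\<Union>A\<in>\<A>. A \<inter> B) g) powr s"
    using M_superadd[OF fin, of "\<lambda>A. A \<inter> B" g] admissible_family_disjoint[OF adm] AX by blast
  have inside_B: "M (restr (\<Union>A\<in>\<A>. A \<inter> B) g) powr s \<le> (2 * lam) powr s * m B"
    using g_small B(1) by (intro M_powr_le_Linf_rho) auto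
  have "lam powr s * m (\<Union>\<A>) \<le> lam powr s * (\<Sum>A\<in>\<A>. m A)"
    using m_UN_le[OF fin, of "\<lambda>A. A"] AX by (intro mult_left_mono) auto
  also have "\<dots> = (\<Sum>A\<in>\<A>. lam powr s * m A)"
    by (simp add: sum_distrib_left)
  also have "\<dots> \<le> (\<Sum>A\<in>\<A>. 2 * K2 * M (restr (A \<inter> B) g) powr s)"
    using large_rho_concentrates[OF lam _ _ _ B(2)] admissible_familyD[OF adm]
    by (intro sum_mono less_imp_le) auto
  also have "\<dots> = 2 * K2 * (\<Sum>A\<in>\<A>. M (restr (A \<inter> B) g) powr s)"
    by (simp add: sum_distrib_left)
  also have "\<dots> \<le> 2 * K2 * (K1 * ((2 * lam) powr s * m B))"
  proof -
    have "K1 * M (restr (\<Union>A\<in>\<A>. A \<inter> B) g) powr s \<le> K1 * ((2 * lam) powr s * m B)"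
      using inside_B K1_pos by (intro mult_left_mono) auto
    then show ?thesis
      using order_trans[OF superadd] K2_pos by (intro mult_left_mono) auto
  qed
  also have "\<dots> = lam powr s * (CC * m B)"
  proof -
    have "(2 * lam) powr s = 2 powr s * lam powr s"
      using lam by (simp add: powr_mult)
    moreover have "CC = 2 * 2 powr s * K1 * K2"
      by (simp add: decomp_C_def powr_add)
    ultimately show ?thesis
      by (simp add: algebra_simps)
  qed
  finally show ?thesis
    using lam by simp
qed

lemma Linf_rho_outside_maximal_family:
  assumes lam: "0 < lam" and adm: "admissible_family g lam \<A>"
    and max: "\<And>\<A>'. admissible_family g lam \<A>' \<Longrightarrow> card (\<Union>\<A>') \<le> card (\<Union>\<A>)"
  shows "Linf_rho (restr (X - \<Union>\<A>) g) \<le> lam"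
  unfolding Linf_rho_le_iff
proof (intro conjI allI impI)
  show "0 \<le> lam"
    using lam by simp
  fix A
  assume A: "A \<subseteq> X" "A \<noteq> {}"
  show "rho (restr (X - \<Union>\<A>) g) A \<le> lam"
  proof (rule ccontr)
    assume gt: "\<not> rho (restr (X - \<Union>\<A>) g) A \<le> lam"
    define A' where "A' = A \<inter> supp_on X g - \<Union>\<A>"
    have A'A: "A' \<subseteq> A"
      by (auto simp: A'_def)
    have eq: "restr A (restr (X - \<Union>\<A>) g) = restr A' g"
      unfolding restr_restr A'_def using A(1) by (intro restr_cong_support) (auto simp: supp_on_def)
    have "A \<inter> {x. restr (X - \<Union>\<A>) g x \<noteq> 0} \<noteq> {}"
      using gt lam by (intro rho_pos_imp_support) simp
    then obtain x where "x \<in> A" "restr (X - \<Union>\<A>) g x \<noteq> 0"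
      by blast
    then have "x \<in> A'"
      using A(1) by (auto simp: A'_def restr_def supp_on_def split: if_split_asm)
    then have A'_ne: "A' \<noteq> {}"
      by blast
    have "m A powr (- 1 / s) \<le> m A' powr (- 1 / s)"
      using m_pos[of A'] A'_ne A'A A(1) m_mono[OF A'A A(1)] s_pos by (intro powr_mono2') auto
    then have "rho (restr (X - \<Union>\<A>) g) A \<le> rho g A'"
      unfolding rho_def eq using M_nonneg by (intro mult_right_mono) auto
    with gt have "lam < rho g A'"
      by linarith
    moreover have "A' \<subseteq> supp_on X g" "A' \<inter> \<Union>\<A> = {}"
      by (auto simp: A'_def)
    ultimately have "admissible_family g lam (insert A' \<A>)"
      using adm A'_ne by (blast intro: admissible_family_insert)
    then have "card (\<Union>(insert A' \<A>)) \<le> card (\<Union>\<A>)"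
      by (rule max)
    moreover have "\<Union>(insert A' \<A>) \<subseteq> X"
      using A'A A(1) admissible_familyD(3)[OF adm] by blast
    then have "card (\<Union>\<A>) < card (\<Union>(insert A' \<A>))"
      using A'_ne unfolding A'_def by (intro psubset_card_mono finite_subset[OF _ finite_X]) auto
    ultimately show False
      by simp
  qed
qed

definition layer_family :: "('a \<Rightarrow> real) \<Rightarrow> real \<Rightarrow> 'a set set" where
  "layer_family g lam = (SOME \<A>. admissible_family g lam \<A> \<and>
     (\<forall>\<A>'. admissible_family g lam \<A>' \<longrightarrow> card (\<Union>\<A>') \<le> card (\<Union>\<A>)))"

definition layer :: "('a \<Rightarrow> real) \<Rightarrow> real \<Rightarrow> 'a set" where
  "layer g lam = \<Union>(layer_family g lam)"

lemma layer_family_maximal: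
  "admissible_family g lam (layer_family g lam) \<and>
   (\<forall>\<A>'. admissible_family g lam \<A>' \<longrightarrow> card (\<Union>\<A>') \<le> card (\<Union>(layer_family g lam)))"
proof -
  have "\<exists>\<A>. admissible_family g lam \<A> \<and>
      (\<forall>\<A>'. admissible_family g lam \<A>' \<longrightarrow> card (\<Union>\<A>') \<le> card (\<Union>\<A>))"
  proof (rule ex_has_greatest_nat[where P = "admissible_family g lam" and f = "\<lambda>\<A>. card (\<Union>\<A>)"
        and k = "{}" and b = "Suc (card X)"])
    show "admissible_family g lam {}"
      by (simp add: admissible_family_def)
    show "\<forall>\<A>'. admissible_family g lam \<A>' \<longrightarrow> card (\<Union>\<A>') < Suc (card X)"
      using admissible_familyD(3) by (intro allI impI le_imp_less_Suc card_mono[OF finite_X]) blast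
  qed
  then show ?thesis
    unfolding layer_family_def by (rule someI_ex)
qed

lemma layer_subset_supp: "layer g lam \<subseteq> supp_on X g"
  using layer_family_maximal admissible_familyD(2) unfolding layer_def by blast

lemma Linf_rho_outside_layer: "0 < lam \<Longrightarrow> Linf_rho (restr (X - layer g lam) g) \<le> lam"
  unfolding layer_def using layer_family_maximal by (blast intro: Linf_rho_outside_maximal_family)

lemma rho_layer_gt: "0 < lam \<Longrightarrow> layer g lam \<noteq> {} \<Longrightarrow> cc * lam < rho g (layer g lam)"
  unfolding layer_def using layer_family_maximal rho_Union_admissible_gt by fastforce

lemma measure_layer_le:
  "0 < lam \<Longrightarrow> Linf_rho g \<le> 2 * lam \<Longrightarrow> B \<subseteq> X \<Longrightarrow> Linf_rho (restr (X - B) g) \<le> cc * lam \<Longrightarrow>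
    m (layer g lam) \<le> CC * m B"
  unfolding layer_def using layer_family_maximal measure_Union_admissible_le by blast

definition top_level :: "('a \<Rightarrow> real) \<Rightarrow> int" where
  "top_level f = (SOME k. Linf_rho f \<le> 2 powr real_of_int k)"

lemma Linf_rho_le_top_level: "Linf_rho f \<le> 2 powr real_of_int (top_level f)"
proof -
  obtain n :: nat where "Linf_rho f < 2 ^ n"
    using real_arch_pow[of 2 "Linf_rho f"] by auto
  then have "Linf_rho f \<le> 2 powr real_of_int (int n)"
    by (simp add: powr_realpow)
  then show ?thesis
    unfolding top_level_def by (rule someI)
qed

fun peeled :: "('a \<Rightarrow> real) \<Rightarrow> nat \<Rightarrow> 'a set" where
  "peeled f 0 = {}"
| "peeled f (Suc n) =
     peeled f n \<union> layer (restr (X - peeled f n) f) (2 powr real_of_int (top_level f - int n - 1))"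

text \<open>\<open>band f k\<close> and \<open>bands_above f k\<close> are the sets \<open>E\<^sub>k\<close> and \<open>F\<^sub>k\<close> of the statement.\<close>

definition band :: "('a \<Rightarrow> real) \<Rightarrow> int \<Rightarrow> 'a set" where
  "band f k = (if top_level f \<le> k then {}
     else layer (restr (X - peeled f (nat (top_level f - k - 1))) f) (2 powr real_of_int k))"

definition bands_above :: "('a \<Rightarrow> real) \<Rightarrow> int \<Rightarrow> 'a set" where
  "bands_above f k = (\<Union>l\<in>{k..}. band f l)"

lemma band_above_top: "top_level f \<le> k \<Longrightarrow> band f k = {}"
  by (simp add: band_def)

lemma peeled_eq_bands_above: "peeled f n = bands_above f (top_level f - int n)"
proof (induction n)
  case 0
  then show ?case
    by (auto simp: bands_above_def band_above_top)
next
  case (Suc n)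
  have "{top_level f - int (Suc n)..} = insert (top_level f - int n - 1) {top_level f - int n..}"
    by auto
  then show ?case
    using Suc.IH by (simp add: bands_above_def band_def Un_commute)
qed

lemma bands_above_insert: "bands_above f k = band f k \<union> bands_above f (k + 1)"
proof -
  have "{k..} = insert k {k + 1..}"
    by auto
  then show ?thesis
    by (simp add: bands_above_def)
qed

lemma bands_above_top: "top_level f \<le> k \<Longrightarrow> bands_above f k = {}"
  by (simp add: bands_above_def band_above_top)

lemma band_eq_layer:
  "k < top_level f \<Longrightarrow> band f k = layer (restr (X - bands_above f (k + 1)) f) (2 powr real_of_int k)"
  using peeled_eq_bands_above[of f "nat (top_level f - k - 1)"] by (simp add: band_def)

lemma band_subset: "band f k \<subseteq> supp_on X f - bands_above f (k + 1)"
proof (cases "k < top_level f")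
  case True
  then show ?thesis
    using layer_subset_supp[of "restr (X - bands_above f (k + 1)) f" "2 powr real_of_int k"]
    by (simp add: band_eq_layer supp_on_restr_diff)
qed (simp add: band_above_top)

lemma band_subset_X: "band f k \<subseteq> X"
  using band_subset by (auto simp: supp_on_def)

lemma bands_above_subset_X: "bands_above f k \<subseteq> X"
  using band_subset_X by (auto simp: bands_above_def)

lemma band_disjoint:
  assumes "k \<noteq> l"
  shows "band f k \<inter> band f l = {}"
proof -
  have "band f k \<inter> band f l = {}" if "k < l" for k l
  proof -
    have "band f l \<subseteq> bands_above f (k + 1)"
      using that unfolding bands_above_def by (intro UN_upper) simp
    then show ?thesis
      using band_subset[of f k] by blast
  qed
  with assms show ?thesis
    by (metis Int_commute linorder_neqE)
qed

lemma Linf_rho_outside_bands_above: "Linf_rho (restr (X - bands_above f k) f) \<le> 2 powr real_of_int k"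
proof (cases "k < top_level f")
  case True
  have "restr (X - bands_above f k) f = restr (X - band f k) (restr (X - bands_above f (k + 1)) f)"
    unfolding restr_restr bands_above_insert[of f k] by (simp add: Diff_Un Int_commute)
  then show ?thesis
    using Linf_rho_outside_layer[of "2 powr real_of_int k"] band_eq_layer[OF True] by simp
next
  case False
  then have "Linf_rho (restr (X - bands_above f k) f) = Linf_rho f"
    using bands_above_top[of f k] Linf_rho_restr_X by simp
  also have "\<dots> \<le> 2 powr real_of_int k"
  proof -
    have "2 powr real_of_int (top_level f) \<le> 2 powr real_of_int k"
      using False by (intro powr_mono) auto
    with Linf_rho_le_top_level[of f] show ?thesis
      by linarith
  qed
  finally show ?thesis .
qed

lemma rho_band_gt:
  "band f k \<noteq> {} \<Longrightarrow> cc * 2 powr real_of_int k < rho (restr (X - bands_above f (k + 1)) f) (band f k)"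
  using band_above_top[of f k] band_eq_layer[of k f] rho_layer_gt by (cases "k < top_level f") auto

lemma level_rho_le_bands_above: "level_rho f (2 powr real_of_int k) \<le> m (bands_above f k)"
  using level_rho_le_measure[OF bands_above_subset_X Linf_rho_outside_bands_above] .

lemma measure_band_le: "m (band f k) \<le> CC * level_rho f (cc * 2 powr real_of_int k)"
proof (cases "k < top_level f")
  case True
  define g where "g = restr (X - bands_above f (k + 1)) f"
  have "0 \<le> cc * 2 powr real_of_int k"
    using cc_pos by simp
  then obtain B where B: "B \<subseteq> X" "Linf_rho (restr (X - B) f) \<le> cc * 2 powr real_of_int k"
    "level_rho f (cc * 2 powr real_of_int k) = m B"
    using level_rho_attained by blast
  have "Linf_rho g \<le> 2 * 2 powr real_of_int k"
    using Linf_rho_outside_bands_above[of f "k + 1"] by (simp add: g_def powr_add)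
  moreover have "Linf_rho (restr (X - B) g) \<le> cc * 2 powr real_of_int k"
    using Linf_rho_restr_mono[of "(X - B) \<inter> (X - bands_above f (k + 1))" "X - B" f] B(2)
    by (simp add: g_def restr_restr)
  ultimately show ?thesis
    using measure_layer_le[OF _ _ B(1)] band_eq_layer[OF True] B(3) by (simp add: g_def)
next
  case False
  then show ?thesis
    using band_above_top[of f k] m_empty level_rho_nonneg[of "cc * 2 powr real_of_int k" f]
      cc_pos CC_pos by simp
qed

lemma Union_band: "(\<Union>k. band f k) = supp_on X f"
proof
  show "(\<Union>k. band f k) \<subseteq> supp_on X f"
    using band_subset by blast
  show "supp_on X f \<subseteq> (\<Union>k. band f k)"
  proof
    fix x
    assume "x \<in> supp_on X f"
    then have x: "x \<in> X" "f x \<noteq> 0"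
      by (auto simp: supp_on_def)
    have pos: "0 < rho f {x}"
      unfolding rho_def using M_point_pos[of x f, OF x] m_pos[of "{x}"] x by simp
    obtain k :: int where k: "2 powr real_of_int k < rho f {x}"
    proof
      have "2 powr real_of_int (\<lfloor>log 2 (rho f {x})\<rfloor> - 1) \<le> 2 powr (log 2 (rho f {x}) - 1)"
        by (intro powr_mono) linarith+
      also have "\<dots> < rho f {x}"
        using pos by (simp add: powr_diff)
      finally show "2 powr real_of_int (\<lfloor>log 2 (rho f {x})\<rfloor> - 1) < rho f {x}" .
    qed
    show "x \<in> (\<Union>k. band f k)"
    proof (rule ccontr)
      assume "x \<notin> (\<Union>k. band f k)"
      then have "restr {x} (restr (X - bands_above f k) f) = restr {x} f"
        unfolding restr_restr using x(1) by (auto simp: bands_above_def restr_def)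
      then have "rho f {x} \<le> Linf_rho (restr (X - bands_above f k) f)"
        using Linf_rho_ge[of "{x}" "restr (X - bands_above f k) f"] x(1) by (simp add: rho_def)
      with k Linf_rho_outside_bands_above[of f k] show False
        by simp
    qed
  qed
qed

definition band_levels :: "('a \<Rightarrow> real) \<Rightarrow> int set" where
  "band_levels f = {k. band f k \<noteq> {}}"

lemma finite_band_levels: "finite (band_levels f)"
proof -
  have "inj_on (band f) (band_levels f)"
    using band_disjoint unfolding band_levels_def by (fastforce intro: inj_onI)
  moreover have "band f ` band_levels f \<subseteq> Pow X"
    using band_subset_X by auto
  ultimately show ?thesis
    using finite_X by (meson finite_Pow_iff finite_subset inj_on_finite)
qed

lemma measure_bands_above_le:
  "m (bands_above f k) \<le> (\<Sum>l\<in>band_levels f. if k \<le> l then m (band f l) else 0)"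
proof -
  have "bands_above f k = (\<Union>l\<in>{l\<in>band_levels f. k \<le> l}. band f l)"
    unfolding bands_above_def band_levels_def by auto
  then have "m (bands_above f k) \<le> (\<Sum>l\<in>{l\<in>band_levels f. k \<le> l}. m (band f l))"
    using m_UN_le[of "{l\<in>band_levels f. k \<le> l}" "band f"] finite_band_levels band_subset_X by simp
  also have "\<dots> = (\<Sum>l\<in>band_levels f. if k \<le> l then m (band f l) else 0)"
    using finite_band_levels by (simp add: sum.If_cases Int_def conj_commute)
  finally show ?thesis .
qed

lemma level_rho_le_band_steps:
  assumes t: "0 < t"
  shows "level_rho f t \<le> (\<Sum>k\<in>band_levels f. m (band f k) * indicator {0<..2 powr real_of_int (k + 1)} t)"
proof -
  define j where "j = \<lfloor>log 2 t\<rfloor>"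
  have j_le: "2 powr real_of_int j \<le> t"
    using t powr_mono[of "real_of_int j" "log 2 t" 2] by (simp add: j_def)
  have j_gt: "t < 2 powr real_of_int (j + 1)"
    using t by (simp add: j_def log_less_iff[symmetric] del: of_int_add) linarith
  have "level_rho f t \<le> level_rho f (2 powr real_of_int j)"
    using level_rho_antimono[OF _ j_le] by simp
  also have "\<dots> \<le> m (bands_above f j)"
    by (rule level_rho_le_bands_above)
  also have "\<dots> \<le> (\<Sum>k\<in>band_levels f. if j \<le> k then m (band f k) else 0)"
    by (rule measure_bands_above_le)
  also have "\<dots> \<le> (\<Sum>k\<in>band_levels f. m (band f k) * indicator {0<..2 powr real_of_int (k + 1)} t)"
  proof (rule sum_mono)
    fix k
    have "t \<le> 2 powr real_of_int (k + 1)" if "j \<le> k"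
    proof -
      have "2 powr real_of_int (j + 1) \<le> 2 powr real_of_int (k + 1)"
        using that by (intro powr_mono) auto
      with j_gt show ?thesis
        by linarith
    qed
    then show "(if j \<le> k then m (band f k) else 0) \<le> m (band f k) * indicator {0<..2 powr real_of_int (k + 1)} t"
      using t m_nonneg[OF band_subset_X] by (auto simp: indicator_def)
  qed
  finally show ?thesis .
qed

lemma Lp_pow_le_band_sum:
  assumes p: "0 < p"
  shows "Lp_pow p f \<le> 2 powr p * (\<Sum>k\<in>band_levels f. 2 powr (real_of_int k * p) * m (band f k))"
proof -
  have "Lp_pow p f \<le> (\<Sum>k\<in>band_levels f. m (band f k) * ((2 powr real_of_int (k + 1)) powr p - 0 powr p))"
    using level_rho_le_band_steps by (intro Lp_pow_le_steps[OF p]) auto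
  also have "\<dots> = 2 powr p * (\<Sum>k\<in>band_levels f. 2 powr (real_of_int k * p) * m (band f k))"
  proof -
    have "(2 powr real_of_int (k + 1)) powr p = 2 powr p * 2 powr (real_of_int k * p)" for k
      by (simp add: powr_powr powr_add[symmetric] algebra_simps)
    then show ?thesis
      using p by (simp add: sum_distrib_left mult_ac)
  qed
  finally show ?thesis .
qed

lemma band_sum_le_Lp_pow:
  assumes p: "0 < p"
  shows "(\<Sum>k\<in>band_levels f. 2 powr (real_of_int k * p) * m (band f k)) \<le> band_sum_const s K1 K2 p * Lp_pow p f"
proof -
  have "(\<Sum>k\<in>band_levels f. 2 powr (real_of_int k * p) * m (band f k))
      \<le> (\<Sum>k\<in>band_levels f. 2 powr (real_of_int k * p) * (CC * level_rho f (cc * 2 powr real_of_int k)))"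
    using measure_band_le by (intro sum_mono mult_left_mono) auto
  also have "\<dots> = CC * (\<Sum>k\<in>band_levels f. 2 powr (real_of_int k * p) * level_rho f (cc * 2 powr real_of_int k))"
    by (simp add: sum_distrib_left mult_ac)
  also have "\<dots> \<le> CC * (cc powr (- p) / (1 - 2 powr (- p)) * Lp_pow p f)"
    using dyadic_level_sum_le_Lp_pow[OF p finite_band_levels cc_pos] CC_pos by (intro mult_left_mono) auto
  also have "\<dots> = band_sum_const s K1 K2 p * Lp_pow p f"
    by (simp add: band_sum_const_def)
  finally show ?thesis .
qed

end

section \<open>Sizes with an additive local norm\<close>

definition level_gap :: "real \<Rightarrow> real \<Rightarrow> nat" where
  "level_gap s c = (LEAST n. 2 / c powr s < 2 powr (s * real n))"

lemma level_gap_bound: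
  fixes s c :: real and k :: int
  assumes s: "0 < s" and c: "0 < c"
  shows "(2 powr real_of_int (k - int (level_gap s c))) powr s \<le> (c * 2 powr real_of_int k) powr s / 2"
proof -
  define n where "n = level_gap s c"
  have "\<exists>n::nat. 2 / c powr s < (2 powr s) ^ n"
    using s by (intro real_arch_pow) simp
  then have "\<exists>n::nat. 2 / c powr s < 2 powr (s * real n)"
    by (simp add: powr_realpow[symmetric] powr_powr)
  then have "2 / c powr s < 2 powr (s * real n)"
    unfolding n_def level_gap_def by (rule LeastI_ex)
  then have "2 < c powr s * 2 powr (s * real n)"
    using c by (simp add: divide_less_eq mult.commute)
  then have "2 * 2 powr (real_of_int k * s) < c powr s * 2 powr (s * real n) * 2 powr (real_of_int k * s)"
    by simp
  then have "2 powr (real_of_int k * s - s * real n) \<le> c powr s * 2 powr (real_of_int k * s) / 2"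
    by (simp add: powr_diff field_simps)
  moreover have "(2 powr real_of_int (k - int n)) powr s = 2 powr (real_of_int k * s - s * real n)"
    by (simp add: powr_powr algebra_simps)
  moreover have "(c * 2 powr real_of_int k) powr s = c powr s * 2 powr (real_of_int k * s)"
    using c by (simp add: powr_mult powr_powr)
  ultimately show ?thesis
    by (simp add: n_def)
qed

locale additive_size = outer_size +
  fixes phi :: "'a \<Rightarrow> real \<Rightarrow> real"
  assumes phi_nonneg: "\<And>x y. 0 \<le> phi x y" and phi_zero: "\<And>x. phi x 0 = 0"
    and M_powr_eq_sum: "\<And>D g. D \<subseteq> X \<Longrightarrow> M (restr D g) powr s = (\<Sum>x\<in>D. phi x (g x))"

sublocale additive_size \<subseteq> quasi_additive_size X m M s 1 1
proof
  fix I :: "'a set set" and D :: "'a set \<Rightarrow> 'a set" and g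
  assume I: "finite I" and disj: "\<And>i j. i \<in> I \<Longrightarrow> j \<in> I \<Longrightarrow> i \<noteq> j \<Longrightarrow> D i \<inter> D j = {}"
    and DX: "\<And>i. i \<in> I \<Longrightarrow> D i \<subseteq> X"
  have "(\<Sum>i\<in>I. M (restr (D i) g) powr s) = (\<Sum>i\<in>I. \<Sum>x\<in>D i. phi x (g x))"
    using M_powr_eq_sum DX by simp
  also have "\<dots> = (\<Sum>x\<in>(\<Union>i\<in>I. D i). phi x (g x))"
    using I DX disj finite_X by (subst sum.UNION_disjoint) (auto intro: finite_subset)
  also have "\<dots> = M (restr (\<Union>i\<in>I. D i) g) powr s"
    using M_powr_eq_sum DX by (subst M_powr_eq_sum) auto
  finally show "(\<Sum>i\<in>I. M (restr (D i) g) powr s) \<le> 1 * M (restr (\<Union>i\<in>I. D i) g) powr s"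
    by simp
next
  fix D1 D2 g
  assume "D1 \<inter> D2 = {}" "D1 \<subseteq> X" "D2 \<subseteq> X"
  moreover have "finite D1" "finite D2"
    using finite_X \<open>D1 \<subseteq> X\<close> \<open>D2 \<subseteq> X\<close> by (auto intro: finite_subset)
  ultimately show "M (restr (D1 \<union> D2) g) powr s \<le> 1 * (M (restr D1 g) powr s + M (restr D2 g) powr s)"
    using M_powr_eq_sum by (simp add: sum.union_disjoint)
qed simp_all

definition sub_const :: "real \<Rightarrow> real \<Rightarrow> real" where
  "sub_const s q = 2 powr q * decomp_C s 1 1 * (decomp_c s 1 1 * 2 powr (- 1 / s)) powr (- q)
     / (1 - 2 powr (- q))"

definition super_const :: "real \<Rightarrow> real \<Rightarrow> real" where
  "super_const s q = 2 powr (q + s + 1) / decomp_c s 1 1 powr s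
     * 2 powr (real (level_gap s (decomp_c s 1 1)) * (q - s)) * band_sum_const s 1 1 q"

lemma sub_const_pos: "0 < q \<Longrightarrow> 0 < sub_const s q"
  using powr_less_one[of 2 "- q"] decomp_c_pos[of 1 1 s] decomp_C_pos[of 1 1 s]
  by (simp add: sub_const_def)

lemma super_const_pos: "0 < q \<Longrightarrow> 0 < super_const s q"
  using decomp_c_pos[of 1 1 s] band_sum_const_pos[of q 1 1 s] by (simp add: super_const_def)

context additive_size
begin

abbreviation gap :: nat where
  "gap \<equiv> level_gap s cc"

lemma M_powr_restr_eq_sum:
  "E \<subseteq> X \<Longrightarrow> (\<And>x. x \<in> E \<Longrightarrow> G x = g x) \<Longrightarrow> M (restr E G) powr s = (\<Sum>x\<in>E. phi x (g x))"
  using M_powr_eq_sum[of E G] by simp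

lemma phi_sum_outside_bands_above_le:
  assumes E: "E \<subseteq> X"
  shows "(\<Sum>x\<in>E - bands_above h j. phi x (h x)) \<le> (2 powr real_of_int j) powr s * m E"
proof -
  have "(\<Sum>x\<in>E - bands_above h j. phi x (h x)) = (\<Sum>x\<in>E. phi x (restr (X - bands_above h j) h x))"
    using E finite_X phi_zero
    by (intro sum.mono_neutral_cong_left) (auto simp: restr_def intro: finite_subset)
  also have "\<dots> = M (restr E (restr (X - bands_above h j) h)) powr s"
    using M_powr_eq_sum[OF E] by simp
  also have "\<dots> \<le> (2 powr real_of_int j) powr s * m E"
    using Linf_rho_outside_bands_above order_refl E by (rule M_powr_le_Linf_rho)
  finally show ?thesis .
qed

lemma phi_sum_band_le: "(\<Sum>x\<in>band h k. phi x (h x)) \<le> (2 powr real_of_int (k + 1)) powr s * m (band h k)"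
proof -
  have "band h k - bands_above h (k + 1) = band h k"
    using band_subset[of h k] by blast
  then show ?thesis
    using phi_sum_outside_bands_above_le[OF band_subset_X[of h k], of h "k + 1"] by simp
qed

lemma phi_sum_band_gt:
  assumes ne: "band h k \<noteq> {}"
  shows "(cc * 2 powr real_of_int k) powr s * m (band h k) < (\<Sum>x\<in>band h k. phi x (h x))"
proof -
  have "(cc * 2 powr real_of_int k) powr s * m (band h k)
      < M (restr (band h k) (restr (X - bands_above h (k + 1)) h)) powr s"
    using rho_band_gt[OF ne] rho_gt_iff[OF band_subset_X ne] cc_pos by simp
  also have "\<dots> = (\<Sum>x\<in>band h k. phi x (h x))"
    using band_subset[of h k] band_subset_X[of h k]
    by (intro M_powr_restr_eq_sum band_subset_X) (auto simp: restr_def)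
  finally show ?thesis .
qed

lemma band_restr_subset: "band (restr D g) k \<subseteq> D"
  using band_subset[of "restr D g" k] by (auto simp: supp_on_def restr_def split: if_splits)

lemma band_mass_in_bands_above:
  assumes D: "D \<subseteq> D'"
  shows "(cc * 2 powr real_of_int k) powr s * m (band (restr D g) k)
    \<le> 2 * (\<Sum>x\<in>band (restr D g) k \<inter> bands_above (restr D' g) (k - int gap). phi x (g x))"
proof (cases "band (restr D g) k = {}")
  case False
  define E where "E = band (restr D g) k"
  define F where "F = bands_above (restr D' g) (k - int gap)"
  have ED: "E \<subseteq> D" and EX: "E \<subseteq> X" and fin: "finite E"
    using band_restr_subset band_subset_X finite_subset[OF _ finite_X] by (auto simp: E_def)
  have on_E: "restr D g x = g x" "restr D' g x = g x" if "x \<in> E" for x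
    using that ED D by (auto simp: restr_def)
  have "(cc * 2 powr real_of_int k) powr s * m E < (\<Sum>x\<in>E. phi x (restr D g x))"
    using phi_sum_band_gt[OF False] by (simp add: E_def)
  also have "\<dots> = (\<Sum>x\<in>E \<inter> F. phi x (g x)) + (\<Sum>x\<in>E - F. phi x (restr D' g x))"
  proof -
    have "(\<Sum>x\<in>E. phi x (restr D g x)) = (\<Sum>x\<in>E. phi x (g x))"
      "(\<Sum>x\<in>E - F. phi x (restr D' g x)) = (\<Sum>x\<in>E - F. phi x (g x))"
      using on_E by (auto intro: sum.cong)
    then show ?thesis
      using sum.Int_Diff[OF fin, of "\<lambda>x. phi x (g x)" F] by simp
  qed
  finally have "(cc * 2 powr real_of_int k) powr s * m E
      < (\<Sum>x\<in>E \<inter> F. phi x (g x)) + (\<Sum>x\<in>E - F. phi x (restr D' g x))" .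
  moreover have "(\<Sum>x\<in>E - F. phi x (restr D' g x)) \<le> (2 powr real_of_int (k - int gap)) powr s * m E"
    unfolding F_def by (rule phi_sum_outside_bands_above_le[OF EX])
  moreover have "(2 powr real_of_int (k - int gap)) powr s * m E \<le> (cc * 2 powr real_of_int k) powr s * m E / 2"
    using mult_right_mono[OF level_gap_bound[OF s_pos cc_pos, of k] m_nonneg[OF EX]] by simp
  ultimately show ?thesis
    by (simp add: E_def F_def)
qed (simp add: m_empty)

definition band_weight :: "real \<Rightarrow> ('a \<Rightarrow> real) \<Rightarrow> 'a \<Rightarrow> real" where
  "band_weight r h x = (\<Sum>j\<in>band_levels h. if x \<in> band h j then 2 powr (real_of_int j * r) else 0)"

lemma band_weight_nonneg: "0 \<le> band_weight r h x"
  unfolding band_weight_def by (intro sum_nonneg) auto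

lemma band_weight_ge:
  assumes "x \<in> band h j"
  shows "2 powr (real_of_int j * r) \<le> band_weight r h x"
proof -
  have "(if x \<in> band h j then 2 powr (real_of_int j * r) else 0) \<le> band_weight r h x"
    unfolding band_weight_def using assms finite_band_levels
    by (intro member_le_sum) (auto simp: band_levels_def)
  with assms show ?thesis
    by simp
qed

lemma powr_le_band_weight:
  assumes r: "0 \<le> r" and x: "x \<in> bands_above h (k - int n)"
  shows "2 powr (real_of_int k * r) \<le> 2 powr (real n * r) * band_weight r h x"
proof -
  obtain j where j: "k - int n \<le> j" "x \<in> band h j"
    using x by (auto simp: bands_above_def)
  have "real_of_int k * r \<le> real n * r + real_of_int j * r"
    using j(1) r by (simp add: distrib_right[symmetric] mult_right_mono)
  then have "2 powr (real_of_int k * r) \<le> 2 powr (real n * r) * 2 powr (real_of_int j * r)"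
    by (simp add: powr_add[symmetric])
  also have "\<dots> \<le> 2 powr (real n * r) * band_weight r h x"
    using band_weight_ge[OF j(2)] by (intro mult_left_mono) auto
  finally show ?thesis .
qed

lemma band_mass_le_weighted:
  assumes sq: "s \<le> q" and D: "D \<subseteq> D'"
  shows "2 powr (real_of_int k * q) * m (band (restr D g) k) \<le> 2 / cc powr s * 2 powr (real gap * (q - s))
    * (\<Sum>x\<in>band (restr D g) k. band_weight (q - s) (restr D' g) x * phi x (g x))"
proof -
  define E where "E = band (restr D g) k"
  define F where "F = bands_above (restr D' g) (k - int gap)"
  define w where "w = band_weight (q - s) (restr D' g)"
  have fin: "finite E"
    using band_subset_X finite_subset[OF _ finite_X] by (auto simp: E_def)
  have "2 powr (real_of_int k * q) * m E
      = 2 powr (real_of_int k * (q - s)) / cc powr s * ((cc * 2 powr real_of_int k) powr s * m E)"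
    using cc_pos by (simp add: powr_mult powr_powr powr_add[symmetric] algebra_simps)
  also have "\<dots> \<le> 2 powr (real_of_int k * (q - s)) / cc powr s * (2 * (\<Sum>x\<in>E \<inter> F. phi x (g x)))"
    using band_mass_in_bands_above[OF D, of k g] cc_pos by (intro mult_left_mono) (auto simp: E_def F_def)
  also have "\<dots> = 2 / cc powr s * (\<Sum>x\<in>E \<inter> F. 2 powr (real_of_int k * (q - s)) * phi x (g x))"
    by (simp add: sum_distrib_left sum_divide_distrib mult_ac)
  also have "\<dots> \<le> 2 / cc powr s * (\<Sum>x\<in>E \<inter> F. 2 powr (real gap * (q - s)) * w x * phi x (g x))"
    using powr_le_band_weight[of "q - s" _ "restr D' g" k gap] sq phi_nonneg cc_pos
    by (intro mult_left_mono sum_mono mult_right_mono) (auto simp: F_def w_def)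
  also have "\<dots> \<le> 2 / cc powr s * (\<Sum>x\<in>E. 2 powr (real gap * (q - s)) * w x * phi x (g x))"
    using fin band_weight_nonneg phi_nonneg cc_pos
    by (intro mult_left_mono sum_mono2) (auto simp: w_def)
  finally show ?thesis
    by (simp add: E_def w_def sum_distrib_left mult_ac)
qed

lemma sum_over_bands: "(\<Sum>k\<in>band_levels h. \<Sum>x\<in>band h k. u x) = (\<Sum>x\<in>supp_on X h. u x)"
proof -
  have "supp_on X h = (\<Union>k\<in>band_levels h. band h k)"
    unfolding Union_band[of h, symmetric] band_levels_def by auto
  moreover have "finite (band h k)" for k
    using band_subset_X finite_X by (rule finite_subset)
  ultimately show ?thesis
    using finite_band_levels band_disjoint by (simp add: sum.UNION_disjoint)
qed

lemma Lp_pow_restr_le_weighted: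
  assumes sq: "s \<le> q" and D: "D \<subseteq> D'"
  shows "Lp_pow q (restr D g) \<le> 2 powr (q + 1) / cc powr s * 2 powr (real gap * (q - s))
    * (\<Sum>x\<in>D \<inter> X. band_weight (q - s) (restr D' g) x * phi x (g x))"
proof -
  define h where "h = restr D g"
  define u where "u x = band_weight (q - s) (restr D' g) x * phi x (g x)" for x
  define A where "A = 2 / cc powr s * 2 powr (real gap * (q - s))"
  have u_nonneg: "0 \<le> u x" for x
    using band_weight_nonneg phi_nonneg by (simp add: u_def)
  have "Lp_pow q h \<le> 2 powr q * (\<Sum>k\<in>band_levels h. 2 powr (real_of_int k * q) * m (band h k))"
    using sq s_pos by (intro Lp_pow_le_band_sum) simp
  also have "\<dots> \<le> 2 powr q * (\<Sum>k\<in>band_levels h. A * (\<Sum>x\<in>band h k. u x))"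
    using band_mass_le_weighted[OF sq D] by (intro mult_left_mono sum_mono) (auto simp: h_def A_def u_def)
  also have "\<dots> = 2 powr q * (A * (\<Sum>k\<in>band_levels h. \<Sum>x\<in>band h k. u x))"
    by (simp add: sum_distrib_left)
  also have "\<dots> = 2 powr q * A * (\<Sum>x\<in>supp_on X h. u x)"
    by (simp only: sum_over_bands mult.assoc)
  also have "\<dots> \<le> 2 powr q * A * (\<Sum>x\<in>D \<inter> X. u x)"
    using u_nonneg cc_pos finite_X
    by (intro mult_left_mono sum_mono2) (auto simp: h_def A_def supp_on_def restr_def)
  finally show ?thesis
    by (simp add: h_def A_def u_def powr_add mult_ac)
qed

lemma weighted_phi_sum_le_band_sum:
  "(\<Sum>x\<in>X. band_weight (q - s) h x * phi x (h x))
    \<le> 2 powr s * (\<Sum>j\<in>band_levels h. 2 powr (real_of_int j * q) * m (band h j))"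
proof -
  have "(\<Sum>x\<in>X. band_weight (q - s) h x * phi x (h x))
      = (\<Sum>x\<in>X. \<Sum>j\<in>band_levels h.
          if x \<in> band h j then 2 powr (real_of_int j * (q - s)) * phi x (h x) else 0)"
    by (auto simp: band_weight_def sum_distrib_right intro!: sum.cong)
  also have "\<dots> = (\<Sum>j\<in>band_levels h. \<Sum>x\<in>X.
      if x \<in> band h j then 2 powr (real_of_int j * (q - s)) * phi x (h x) else 0)"
    by (rule sum.swap)
  also have "\<dots> = (\<Sum>j\<in>band_levels h. 2 powr (real_of_int j * (q - s)) * (\<Sum>x\<in>band h j. phi x (h x)))"
    by (intro sum.cong refl)
       (simp add: sum.inter_restrict[OF finite_X, symmetric] Int_absorb1[OF band_subset_X] sum_distrib_left)
  also have "\<dots> \<le> (\<Sum>j\<in>band_levels h. 2 powr (real_of_int j * (q - s))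
      * ((2 powr real_of_int (j + 1)) powr s * m (band h j)))"
    using phi_sum_band_le by (intro sum_mono mult_left_mono) auto
  also have "\<dots> = 2 powr s * (\<Sum>j\<in>band_levels h. 2 powr (real_of_int j * q) * m (band h j))"
  proof -
    have "2 powr (real_of_int j * (q - s)) * (2 powr real_of_int (j + 1)) powr s
        = 2 powr s * 2 powr (real_of_int j * q)" for j
      by (simp add: powr_powr powr_add[symmetric] algebra_simps)
    then show ?thesis
      by (simp add: sum_distrib_left mult.assoc[symmetric])
  qed
  finally show ?thesis .
qed

lemma sum_Lp_pow_le_Lp_pow_Union:
  assumes sq: "s \<le> q" and J: "finite J"
    and disj: "\<And>i j. i \<in> J \<Longrightarrow> j \<in> J \<Longrightarrow> i \<noteq> j \<Longrightarrow> D i \<inter> D j = {}"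
    and DX: "\<And>i. i \<in> J \<Longrightarrow> D i \<subseteq> X"
  shows "(\<Sum>i\<in>J. Lp_pow q (restr (D i) g)) \<le> super_const s q * Lp_pow q (restr (\<Union>i\<in>J. D i) g)"
proof -
  define D' where "D' = (\<Union>i\<in>J. D i)"
  define h where "h = restr D' g"
  define A where "A = 2 powr (q + 1) / cc powr s * 2 powr (real gap * (q - s))"
  define u where "u x = band_weight (q - s) h x * phi x (g x)" for x
  have A: "0 \<le> A"
    by (simp add: A_def)
  have fin: "finite (D i)" if "i \<in> J" for i
    using DX[OF that] finite_X by (rule finite_subset)
  have D'X: "D' \<subseteq> X"
    using DX by (auto simp: D'_def)
  have "(\<Sum>i\<in>J. Lp_pow q (restr (D i) g)) \<le> (\<Sum>i\<in>J. A * (\<Sum>x\<in>D i. u x))"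
  proof (rule sum_mono)
    fix i
    assume "i \<in> J"
    then have "D i \<subseteq> D'" "D i \<inter> X = D i"
      using DX by (auto simp: D'_def)
    then show "Lp_pow q (restr (D i) g) \<le> A * (\<Sum>x\<in>D i. u x)"
      using Lp_pow_restr_le_weighted[OF sq, of "D i" D' g] by (simp add: A_def u_def h_def)
  qed
  also have "\<dots> = A * (\<Sum>x\<in>D'. u x)"
    unfolding D'_def using J disj fin by (subst sum.UNION_disjoint) (auto simp: sum_distrib_left)
  also have "(\<Sum>x\<in>D'. u x) = (\<Sum>x\<in>X. band_weight (q - s) h x * phi x (h x))"
  proof -
    have "(\<Sum>x\<in>X. band_weight (q - s) h x * phi x (h x)) = (\<Sum>x\<in>X. if x \<in> D' then u x else 0)"
      by (intro sum.cong) (auto simp: h_def u_def restr_def phi_zero)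
    also have "\<dots> = (\<Sum>x\<in>D'. u x)"
      using D'X by (simp add: sum.inter_restrict[OF finite_X, symmetric] Int_absorb1)
    finally show ?thesis ..
  qed
  also have "\<dots> \<le> 2 powr s * (\<Sum>j\<in>band_levels h. 2 powr (real_of_int j * q) * m (band h j))"
    by (rule weighted_phi_sum_le_band_sum)
  also have "\<dots> \<le> 2 powr s * (band_sum_const s 1 1 q * Lp_pow q h)"
    using sq s_pos by (intro mult_left_mono band_sum_le_Lp_pow) auto
  finally have "(\<Sum>i\<in>J. Lp_pow q (restr (D i) g)) \<le> A * (2 powr s * (band_sum_const s 1 1 q * Lp_pow q h))"
    using A by (simp add: mult_left_mono)
  then show ?thesis
    by (simp add: super_const_def A_def h_def D'_def powr_add mult_ac)
qed

lemma level_rho_union_le: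
  assumes t: "0 \<le> t"
  shows "level_rho (restr (D1 \<union> D2) g) (2 powr (1 / s) * t) \<le> level_rho (restr D1 g) t + level_rho (restr D2 g) t"
proof -
  obtain B1 where B1: "B1 \<subseteq> X" "Linf_rho (restr (X - B1) (restr D1 g)) \<le> t" "level_rho (restr D1 g) t = m B1"
    using level_rho_attained[OF t] by blast
  obtain B2 where B2: "B2 \<subseteq> X" "Linf_rho (restr (X - B2) (restr D2 g)) \<le> t" "level_rho (restr D2 g) t = m B2"
    using level_rho_attained[OF t] by blast
  define G where "G = restr (X - (B1 \<union> B2)) (restr (D1 \<union> D2) g)"
  define G1 where "G1 = restr (X - B1) (restr D1 g)"
  define G2 where "G2 = restr (X - B2) (restr D2 g)"
  have "Linf_rho G \<le> 2 powr (1 / s) * t"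
    unfolding Linf_rho_le_iff
  proof (intro conjI allI impI)
    show "0 \<le> 2 powr (1 / s) * t"
      using t by simp
    fix A
    assume A: "A \<subseteq> X" "A \<noteq> {}"
    have "M (restr A G) powr s = (\<Sum>x\<in>A. phi x (G x))"
      using M_powr_eq_sum A by simp
    also have "\<dots> \<le> (\<Sum>x\<in>A. phi x (G1 x) + phi x (G2 x))"
      using phi_nonneg phi_zero by (intro sum_mono) (auto simp: G_def G1_def G2_def restr_def add_increasing2 add_increasing)
    also have "\<dots> = M (restr A G1) powr s + M (restr A G2) powr s"
      using M_powr_eq_sum A by (simp add: sum.distrib)
    also have "\<dots> \<le> t powr s * m A + t powr s * m A"
      using M_powr_le_Linf_rho[OF _ order_refl A(1)] B1(2) B2(2)
      unfolding G1_def G2_def by (intro add_mono)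
    also have "\<dots> = (2 powr (1 / s) * t) powr s * m A"
      using t s_pos by (simp add: powr_mult powr_powr)
    finally show "rho G A \<le> 2 powr (1 / s) * t"
      using rho_le_iff[OF A, of "2 powr (1 / s) * t"] t by simp
  qed
  then have "level_rho (restr (D1 \<union> D2) g) (2 powr (1 / s) * t) \<le> m (B1 \<union> B2)"
    using B1(1) B2(1) by (intro level_rho_le_measure) (auto simp: G_def)
  also have "\<dots> \<le> m B1 + m B2"
    using B1(1) B2(1) by (rule m_Un_le)
  finally show ?thesis
    using B1(3) B2(3) by simp
qed

lemma Lp_pow_union_le:
  assumes q: "0 < q"
  shows "Lp_pow q (restr (D1 \<union> D2) g) \<le> sub_const s q * (Lp_pow q (restr D1 g) + Lp_pow q (restr D2 g))"
proof -
  define h where "h = restr (D1 \<union> D2) g"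
  define c' where "c' = cc * 2 powr (- 1 / s)"
  define a where "a = c' powr (- q) / (1 - 2 powr (- q))"
  define lv where "lv D k = level_rho (restr D g) (c' * 2 powr real_of_int k)" for D k
  have c': "0 < c'"
    using cc_pos by (simp add: c'_def)
  have "Lp_pow q h \<le> 2 powr q * (\<Sum>k\<in>band_levels h. 2 powr (real_of_int k * q) * m (band h k))"
    by (rule Lp_pow_le_band_sum[OF q])
  also have "\<dots> \<le> 2 powr q * (\<Sum>k\<in>band_levels h. 2 powr (real_of_int k * q) * (CC * (lv D1 k + lv D2 k)))"
  proof (rule mult_left_mono, rule sum_mono)
    fix k
    have "cc * 2 powr real_of_int k = 2 powr (1 / s) * (c' * 2 powr real_of_int k)"
      by (simp add: c'_def powr_minus_divide)
    then have "level_rho h (cc * 2 powr real_of_int k) \<le> lv D1 k + lv D2 k"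
      using level_rho_union_le[of "c' * 2 powr real_of_int k" D1 D2 g] c' by (simp add: h_def lv_def mult.assoc)
    then show "2 powr (real_of_int k * q) * m (band h k) \<le> 2 powr (real_of_int k * q) * (CC * (lv D1 k + lv D2 k))"
      using measure_band_le[of h k] CC_pos by (intro mult_left_mono) (auto intro: order_trans)
  qed simp
  also have "\<dots> = 2 powr q * CC * ((\<Sum>k\<in>band_levels h. 2 powr (real_of_int k * q) * lv D1 k)
      + (\<Sum>k\<in>band_levels h. 2 powr (real_of_int k * q) * lv D2 k))"
    by (simp add: sum_distrib_left sum.distrib algebra_simps)
  also have "\<dots> \<le> 2 powr q * CC * (a * Lp_pow q (restr D1 g) + a * Lp_pow q (restr D2 g))"
    using dyadic_level_sum_le_Lp_pow[OF q finite_band_levels c'] CC_pos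
    by (intro mult_left_mono add_mono) (auto simp: a_def lv_def)
  also have "\<dots> = sub_const s q * (Lp_pow q (restr D1 g) + Lp_pow q (restr D2 g))"
    by (simp add: sub_const_def a_def c'_def algebra_simps add_divide_distrib)
  finally show ?thesis
    by (simp add: h_def)
qed

lemma quasi_additive_size_Lp_norm:
  assumes \<mu>: "outer_measure_on X \<mu>" and sq: "s \<le> q"
  shows "quasi_additive_size X \<mu> (Lp_norm X m rho q) q (super_const s q) (sub_const s q)"
proof -
  have q: "0 < q"
    using s_pos sq by simp
  have pow: "Lp_norm X m rho q g powr q = Lp_pow q g" for g
    by (rule Lp_norm_powr[OF q])
  show ?thesis
  proof (intro quasi_additive_size.intro outer_size_Lp_norm[OF \<mu> q] quasi_additive_size_axioms.intro)
    show "0 < super_const s q" "0 < sub_const s q"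
      using q by (simp_all add: super_const_pos sub_const_pos)
    show "(\<Sum>i\<in>I. Lp_norm X m rho q (restr (D i) g) powr q)
        \<le> super_const s q * Lp_norm X m rho q (restr (\<Union>i\<in>I. D i) g) powr q"
      if "finite I" "\<And>i j. i \<in> I \<Longrightarrow> j \<in> I \<Longrightarrow> i \<noteq> j \<Longrightarrow> D i \<inter> D j = {}" "\<And>i. i \<in> I \<Longrightarrow> D i \<subseteq> X"
      for I :: "'a set set" and D g
      unfolding pow by (rule sum_Lp_pow_le_Lp_pow_Union[OF sq that])
    show "Lp_norm X m rho q (restr (D1 \<union> D2) g) powr q
        \<le> sub_const s q * (Lp_norm X m rho q (restr D1 g) powr q + Lp_norm X m rho q (restr D2 g) powr q)"
      for D1 D2 g
      unfolding pow by (rule Lp_pow_union_le[OF q])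
  qed
qed

end

section \<open>Dyadic sums and the main theorem\<close>

lemma has_sum_sum_functions:
  fixes f :: "'b \<Rightarrow> 'c \<Rightarrow> real"
  assumes "finite L" "\<And>l. l \<in> L \<Longrightarrow> (f l has_sum a l) A"
  shows "((\<lambda>x. \<Sum>l\<in>L. f l x) has_sum (\<Sum>l\<in>L. a l)) A"
  using assms
proof (induction L rule: finite_induct)
  case empty
  then show ?case
    by (simp add: has_sum_0)
next
  case (insert l L)
  then have "((\<lambda>x. f l x + (\<Sum>l\<in>L. f l x)) has_sum (a l + (\<Sum>l\<in>L. a l))) A"
    by (intro has_sum_add) auto
  with insert show ?case
    by simp
qed

lemma has_sum_powr_two_atMost:
  fixes p :: real and l :: int
  assumes p: "0 < p"
  shows "((\<lambda>k::int. if k \<le> l then 2 powr (real_of_int k * p) else 0)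
           has_sum (2 powr (real_of_int l * p) / (1 - 2 powr (- p)))) UNIV"
proof -
  define x :: real where "x = 2 powr (- p)"
  have x: "0 \<le> x" "x < 1"
    using powr_less_one[of 2 "- p"] p by (auto simp: x_def)
  have "(\<lambda>n. 2 powr (real_of_int l * p) * x ^ n) sums (2 powr (real_of_int l * p) * (1 / (1 - x)))"
    using x by (intro sums_mult geometric_sums) simp
  then have "((\<lambda>n. 2 powr (real_of_int l * p) * x ^ n) has_sum (2 powr (real_of_int l * p) / (1 - x))) UNIV"
    using x by (intro sums_nonneg_imp_has_sum) auto
  moreover define h :: "nat \<Rightarrow> int" where "h n = l - int n" for n
  have "inj h"
    by (auto simp: h_def inj_on_def)
  moreover have "range h = {..l}"
    by (auto simp: h_def image_iff intro!: exI[of _ "nat (l - _)"])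
  moreover have "(\<lambda>k::int. 2 powr (real_of_int k * p)) \<circ> h = (\<lambda>n. 2 powr (real_of_int l * p) * x ^ n)"
  proof
    fix n
    have "2 powr (real_of_int l * p) * x ^ n = 2 powr (real_of_int l * p + - p * real n)"
      unfolding x_def by (simp add: powr_realpow[symmetric] powr_powr powr_add[symmetric])
    then show "((\<lambda>k::int. 2 powr (real_of_int k * p)) \<circ> h) n = 2 powr (real_of_int l * p) * x ^ n"
      by (simp add: h_def algebra_simps)
  qed
  ultimately have "((\<lambda>k::int. 2 powr (real_of_int k * p)) has_sum (2 powr (real_of_int l * p) / (1 - x))) {..l}"
    using has_sum_reindex[of h UNIV "\<lambda>k::int. 2 powr (real_of_int k * p)"] by simp
  then show ?thesis
    unfolding x_def by (subst has_sum_cong_neutral[where T = "{..l}"]) auto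
qed

lemma infsum_eq_sum_finite_support:
  fixes a :: "'b \<Rightarrow> real"
  assumes "finite L" "\<And>k. k \<notin> L \<Longrightarrow> a k = 0"
  shows "(\<Sum>\<^sub>\<infinity>k. a k) = (\<Sum>k\<in>L. a k)"
proof -
  have "(\<Sum>\<^sub>\<infinity>k. a k) = (\<Sum>\<^sub>\<infinity>k\<in>L. a k)"
    using assms by (intro infsum_cong_neutral) auto
  with assms show ?thesis
    by simp
qed

lemma infsum_tails_eq:
  fixes e :: "int \<Rightarrow> real"
  assumes p: "0 < p" and L: "finite L" and e: "\<And>k. k \<notin> L \<Longrightarrow> e k = 0"
  shows "(\<Sum>\<^sub>\<infinity>k::int. 2 powr (real_of_int k * p) * (\<Sum>\<^sub>\<infinity>l\<in>{k..}. e l))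
     = (\<Sum>l\<in>L. 2 powr (real_of_int l * p) * e l) / (1 - 2 powr (- p))"
proof -
  have tail: "(\<Sum>\<^sub>\<infinity>l\<in>{k..}. e l) = (\<Sum>l\<in>L. if k \<le> l then e l else 0)" for k
  proof -
    have "(\<Sum>\<^sub>\<infinity>l\<in>{k..}. e l) = (\<Sum>\<^sub>\<infinity>l\<in>L \<inter> {k..}. e l)"
      using e by (intro infsum_cong_neutral) auto
    also have "\<dots> = (\<Sum>l\<in>L. if k \<le> l then e l else 0)"
      using L by (simp add: sum.inter_restrict)
    finally show ?thesis .
  qed
  have "((\<lambda>k. \<Sum>l\<in>L. e l * (if k \<le> l then 2 powr (real_of_int k * p) else 0)) has_sum
      (\<Sum>l\<in>L. e l * (2 powr (real_of_int l * p) / (1 - 2 powr (- p))))) UNIV"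
    using L by (intro has_sum_sum_functions has_sum_cmult_right has_sum_powr_two_atMost[OF p])
  moreover have "(\<lambda>k. 2 powr (real_of_int k * p) * (\<Sum>\<^sub>\<infinity>l\<in>{k..}. e l))
      = (\<lambda>k. \<Sum>l\<in>L. e l * (if k \<le> l then 2 powr (real_of_int k * p) else 0))"
    unfolding tail by (auto simp: sum_distrib_left intro!: sum.cong)
  ultimately have "(\<Sum>\<^sub>\<infinity>k::int. 2 powr (real_of_int k * p) * (\<Sum>\<^sub>\<infinity>l\<in>{k..}. e l))
      = (\<Sum>l\<in>L. e l * (2 powr (real_of_int l * p) / (1 - 2 powr (- p))))"
    by (simp add: infsumI)
  then show ?thesis
    by (simp add: sum_divide_distrib mult_ac)
qed

definition norm_equiv_const :: "real \<Rightarrow> real \<Rightarrow> real \<Rightarrow> real \<Rightarrow> real" where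
  "norm_equiv_const s K1 K2 p = 2 powr p + band_sum_const s K1 K2 p / (1 - 2 powr (- p))"

lemma norm_equiv_const_pos: "0 < p \<Longrightarrow> 0 < K1 \<Longrightarrow> 0 < K2 \<Longrightarrow> 0 < norm_equiv_const s K1 K2 p"
  using powr_less_one[of 2 "- p"] band_sum_const_pos[of p K1 K2 s]
  by (simp add: norm_equiv_const_def add_pos_pos)

context quasi_additive_size
begin

lemma infsum_band_sum:
  "(\<Sum>\<^sub>\<infinity>k::int. 2 powr (real_of_int k * p) * m (band f k))
    = (\<Sum>k\<in>band_levels f. 2 powr (real_of_int k * p) * m (band f k))"
  by (intro infsum_eq_sum_finite_support finite_band_levels) (simp add: band_levels_def m_empty)

lemma infsum_band_tails:
  assumes "0 < p"
  shows "(\<Sum>\<^sub>\<infinity>k::int. 2 powr (real_of_int k * p) * (\<Sum>\<^sub>\<infinity>l\<in>{k..}. m (band f l)))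
    = (\<Sum>k\<in>band_levels f. 2 powr (real_of_int k * p) * m (band f k)) / (1 - 2 powr (- p))"
  using assms finite_band_levels by (rule infsum_tails_eq) (simp add: band_levels_def m_empty)

lemma band_sums_equiv_Lp_norm:
  assumes p: "0 < p"
  defines "C' \<equiv> norm_equiv_const s K1 K2 p"
  shows "1 / C' * Lp_norm X m rho p f powr p \<le> (\<Sum>\<^sub>\<infinity>k::int. 2 powr (real_of_int k * p) * m (band f k))"
    and "(\<Sum>\<^sub>\<infinity>k::int. 2 powr (real_of_int k * p) * m (band f k)) \<le> C' * Lp_norm X m rho p f powr p"
    and "1 / C' * Lp_norm X m rho p f powr p
      \<le> (\<Sum>\<^sub>\<infinity>k::int. 2 powr (real_of_int k * p) * (\<Sum>\<^sub>\<infinity>l\<in>{k..}. m (band f l)))"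
    and "(\<Sum>\<^sub>\<infinity>k::int. 2 powr (real_of_int k * p) * (\<Sum>\<^sub>\<infinity>l\<in>{k..}. m (band f l)))
      \<le> C' * Lp_norm X m rho p f powr p"
proof -
  define S where "S = (\<Sum>k\<in>band_levels f. 2 powr (real_of_int k * p) * m (band f k))"
  define B where "B = band_sum_const s K1 K2 p"
  note S_eq = infsum_band_sum[of p f, folded S_def]
  note tails_eq = infsum_band_tails[OF p, of f, folded S_def]
  have q: "0 < 1 - 2 powr (- p)" "1 - 2 powr (- p) \<le> 1"
    using powr_less_one[of 2 "- p"] p by auto
  have S: "0 \<le> S"
    unfolding S_def using m_nonneg[OF band_subset_X] by (intro sum_nonneg mult_nonneg_nonneg) auto
  have B: "0 < B"
    unfolding B_def using p K1_pos K2_pos by (rule band_sum_const_pos)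
  have L: "0 \<le> Lp_pow p f"
    using p by (rule Lp_pow_nonneg)
  have upper: "Lp_pow p f \<le> 2 powr p * S" and lower: "S \<le> B * Lp_pow p f"
    unfolding S_def B_def using Lp_pow_le_band_sum[OF p] band_sum_le_Lp_pow[OF p] by auto
  have C'_ge: "2 powr p \<le> C'" "B / (1 - 2 powr (- p)) \<le> C'"
    using B q by (auto simp: C'_def B_def norm_equiv_const_def)
  have C'_pos: "0 < C'"
    using C'_ge(1) powr_gt_zero[of 2 p] by linarith
  have S_tails: "S \<le> S / (1 - 2 powr (- p))"
    using S q by (simp add: le_divide_eq mult_left_le)
  have "Lp_pow p f \<le> C' * S"
    using upper C'_ge(1) S by (meson mult_right_mono order_trans)
  then have lower': "1 / C' * Lp_pow p f \<le> S"
    using C'_pos by (simp add: field_simps)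
  have "S / (1 - 2 powr (- p)) \<le> B / (1 - 2 powr (- p)) * Lp_pow p f"
    using lower q by (simp add: divide_right_mono)
  also have "\<dots> \<le> C' * Lp_pow p f"
    using C'_ge(2) L by (rule mult_right_mono)
  finally have upper': "S / (1 - 2 powr (- p)) \<le> C' * Lp_pow p f" .
  show "1 / C' * Lp_norm X m rho p f powr p \<le> (\<Sum>\<^sub>\<infinity>k::int. 2 powr (real_of_int k * p) * m (band f k))"
    unfolding S_eq Lp_norm_powr[OF p] by (rule lower')
  show "(\<Sum>\<^sub>\<infinity>k::int. 2 powr (real_of_int k * p) * m (band f k)) \<le> C' * Lp_norm X m rho p f powr p"
    unfolding S_eq Lp_norm_powr[OF p] using S_tails upper' by (rule order_trans)
  show "1 / C' * Lp_norm X m rho p f powr p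
      \<le> (\<Sum>\<^sub>\<infinity>k::int. 2 powr (real_of_int k * p) * (\<Sum>\<^sub>\<infinity>l\<in>{k..}. m (band f l)))"
    unfolding tails_eq Lp_norm_powr[OF p] using lower' S_tails by (rule order_trans)
  show "(\<Sum>\<^sub>\<infinity>k::int. 2 powr (real_of_int k * p) * (\<Sum>\<^sub>\<infinity>l\<in>{k..}. m (band f l)))
      \<le> C' * Lp_norm X m rho p f powr p"
    unfolding tails_eq Lp_norm_powr[OF p] by (rule upper')
qed

lemma dyadic_decomposition:
  assumes p: "0 < p"
  defines "C' \<equiv> norm_equiv_const s K1 K2 p"
  shows "\<exists>E :: int \<Rightarrow> 'a set.
    (\<forall>k l. k \<noteq> l \<longrightarrow> E k \<inter> E l = {}) \<and> (\<Union>k. E k) = supp_on X f \<and>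
    (let F = (\<lambda>k. \<Union>l\<in>{k..}. E l) in
     (\<forall>k::int.
        (E k \<noteq> {} \<longrightarrow> rho (restr (X - F (k + 1)) f) (E k) > cc * 2 powr real_of_int k) \<and>
        Linf X rho (restr (X - F k) f) \<le> 2 powr real_of_int k \<and>
        superlevel X m rho f (2 powr real_of_int k) \<le> m (F k) \<and>
        m (E k) \<le> CC * superlevel X m rho f (cc * 2 powr real_of_int k)) \<and>
     1 / C' * Lp_norm X m rho p f powr p \<le> (\<Sum>\<^sub>\<infinity>k::int. 2 powr (real_of_int k * p) * m (E k)) \<and>
     (\<Sum>\<^sub>\<infinity>k::int. 2 powr (real_of_int k * p) * m (E k)) \<le> C' * Lp_norm X m rho p f powr p \<and>
     1 / C' * Lp_norm X m rho p f powr p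
       \<le> (\<Sum>\<^sub>\<infinity>k::int. 2 powr (real_of_int k * p) * (\<Sum>\<^sub>\<infinity>l\<in>{k..}. m (E l))) \<and>
     (\<Sum>\<^sub>\<infinity>k::int. 2 powr (real_of_int k * p) * (\<Sum>\<^sub>\<infinity>l\<in>{k..}. m (E l)))
       \<le> C' * Lp_norm X m rho p f powr p)"
  unfolding Let_def C'_def
  using band_disjoint Union_band rho_band_gt Linf_rho_outside_bands_above level_rho_le_bands_above
    measure_band_le band_sums_equiv_Lp_norm[OF p]
  by (intro exI[of _ "band f"]) (simp add: bands_above_def[symmetric])

end

lemma additive_size_Lr_norm:
  assumes X: "finite X" and \<nu>: "outer_measure_on X \<nu>" and w: "\<forall>x\<in>X. 0 < w x" and r: "0 < r"
  shows "additive_size X \<nu> (Lr_norm X w r) r (\<lambda>x y. if x \<in> X then w x * \<bar>y\<bar> powr r else 0)"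
proof -
  have sum_eq: "(\<Sum>x\<in>X. w x * \<bar>restr D g x\<bar> powr r) = (\<Sum>x\<in>D. w x * \<bar>g x\<bar> powr r)"
    if D: "D \<subseteq> X" for D g
    using X D by (intro sum.mono_neutral_cong_right) (auto simp: restr_def)
  have pow: "Lr_norm X w r (restr D g) powr r = (\<Sum>x\<in>D. w x * \<bar>g x\<bar> powr r)" if D: "D \<subseteq> X" for D g
  proof -
    have "0 \<le> (\<Sum>x\<in>D. w x * \<bar>g x\<bar> powr r)"
      using w D by (intro sum_nonneg mult_nonneg_nonneg) (auto simp: less_imp_le subset_iff)
    then show ?thesis
      unfolding Lr_norm_def sum_eq[OF D] using r by (simp add: powr_powr)
  qed
  show ?thesis
  proof unfold_locales
    fix g :: "'a \<Rightarrow> real" and D D'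
    assume DD: "D \<subseteq> D'" "D' \<subseteq> X"
    have "(\<Sum>x\<in>X. w x * \<bar>restr D g x\<bar> powr r) \<le> (\<Sum>x\<in>X. w x * \<bar>restr D' g x\<bar> powr r)"
      using DD w by (intro sum_mono) (auto simp: restr_def less_imp_le intro!: mult_nonneg_nonneg)
    then show "Lr_norm X w r (restr D g) \<le> Lr_norm X w r (restr D' g)"
      unfolding Lr_norm_def using r w by (intro powr_mono2) (auto intro!: sum_nonneg mult_nonneg_nonneg simp: less_imp_le)
  next
    fix g :: "'a \<Rightarrow> real" and x
    assume x: "x \<in> X" "g x \<noteq> 0"
    then have "0 < Lr_norm X w r (restr {x} g) powr r"
      using pow[of "{x}" g] w by simp
    then show "0 < Lr_norm X w r (restr {x} g)"
      by (cases "Lr_norm X w r (restr {x} g) = 0") (auto simp: Lr_norm_def)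
  next
    fix D :: "'a set" and g
    assume "D \<subseteq> X"
    then show "Lr_norm X w r (restr D g) powr r = (\<Sum>x\<in>D. if x \<in> X then w x * \<bar>g x\<bar> powr r else 0)"
      using pow[of D g] by (auto intro!: sum.cong)
  qed (use X \<nu> r w in \<open>auto simp: Lr_norm_def intro: less_imp_le\<close>)
qed

theorem proposition3p5:
  fixes p q r :: real
  assumes "0 < p" and "0 < q" and "0 < r" and "r \<le> q"
  shows "\<exists>C c C'. 0 < C \<and> 0 < c \<and> 0 < C' \<and>
    (\<forall>(X :: 'a set) \<mu> \<nu> w (f :: 'a \<Rightarrow> real).
       finite X \<longrightarrow> outer_measure_on X \<mu> \<longrightarrow> outer_measure_on X \<nu> \<longrightarrow>
       (\<forall>x\<in>X. 0 < w x) \<longrightarrow>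
       (let \<rho> = ell_q X \<mu> \<nu> (ell_r X w \<nu> r) q in
        \<exists>E :: int \<Rightarrow> 'a set.
          (\<forall>k l. k \<noteq> l \<longrightarrow> E k \<inter> E l = {}) \<and>
          (\<Union>k. E k) = supp_on X f \<and>
          (let F = (\<lambda>k. \<Union>l\<in>{k..}. E l) in
           (\<forall>k::int.
              (E k \<noteq> {} \<longrightarrow> \<rho> (restr (X - F (k + 1)) f) (E k) > c * 2 powr real_of_int k) \<and>
              Linf X \<rho> (restr (X - F k) f) \<le> 2 powr real_of_int k \<and>
              superlevel X \<mu> \<rho> f (2 powr real_of_int k) \<le> \<mu> (F k) \<and>
              \<mu> (E k) \<le> C * superlevel X \<mu> \<rho> f (c * 2 powr real_of_int k)) \<and>
           (1 / C') * Lp_norm X \<mu> \<rho> p f powr p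
              \<le> (\<Sum>\<^sub>\<infinity>k::int. 2 powr (real_of_int k * p) * \<mu> (E k)) \<and>
           (\<Sum>\<^sub>\<infinity>k::int. 2 powr (real_of_int k * p) * \<mu> (E k))
              \<le> C' * Lp_norm X \<mu> \<rho> p f powr p \<and>
           (1 / C') * Lp_norm X \<mu> \<rho> p f powr p
              \<le> (\<Sum>\<^sub>\<infinity>k::int. 2 powr (real_of_int k * p) * (\<Sum>\<^sub>\<infinity>l\<in>{k..}. \<mu> (E l))) \<and>
           (\<Sum>\<^sub>\<infinity>k::int. 2 powr (real_of_int k * p) * (\<Sum>\<^sub>\<infinity>l\<in>{k..}. \<mu> (E l)))
              \<le> C' * Lp_norm X \<mu> \<rho> p f powr p)))"
proof -
  define K1 K2 where "K1 = super_const r q" and "K2 = sub_const r q"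
  have K: "0 < K1" "0 < K2"
    using assms by (simp_all add: K1_def K2_def super_const_pos sub_const_pos)
  have pos: "0 < decomp_C q K1 K2" "0 < decomp_c q K1 K2" "0 < norm_equiv_const q K1 K2 p"
    using K assms(1) by (simp_all add: decomp_C_pos decomp_c_pos norm_equiv_const_pos)
  show ?thesis
  proof (rule exI[of _ "decomp_C q K1 K2"], rule exI[of _ "decomp_c q K1 K2"],
      rule exI[of _ "norm_equiv_const q K1 K2 p"], intro conjI pos allI impI, goal_cases)
    case (1 X \<mu> \<nu> w f)
    then have X: "finite X" and \<mu>: "outer_measure_on X \<mu>" and \<nu>: "outer_measure_on X \<nu>"
      and w: "\<forall>x\<in>X. 0 < w x"
      by auto
    interpret inner: additive_size X \<nu> "Lr_norm X w r" r "\<lambda>x y. if x \<in> X then w x * \<bar>y\<bar> powr r else 0"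
      using X \<nu> w assms(3) by (rule additive_size_Lr_norm)
    interpret outer: quasi_additive_size X \<mu> "Lp_norm X \<nu> inner.rho q" q K1 K2
      unfolding K1_def K2_def using \<mu> assms(4) by (rule inner.quasi_additive_size_Lp_norm)
    have inner_rho: "inner.rho = ell_r X w \<nu> r"
      by (simp add: fun_eq_iff inner.rho_def ell_r_def)
    have "outer.rho = ell_q X \<mu> \<nu> (ell_r X w \<nu> r) q"
      unfolding inner_rho[symmetric] by (simp add: fun_eq_iff outer.rho_def ell_q_def)
    then show ?case
      using outer.dyadic_decomposition[OF assms(1), of f] by (simp add: Let_def)
  qed
qed

end
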